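(* Let $N$ be a fixed positive integer and let $R$ be a computable POVM on $\Sigma^*$ (with values in $N\times N$ matrices). Then: (i) there exists $d\in\mathbb{N}$ such that for every density matrix $\rho\in\mathrm{Her}(N)$ and every $s\in\Sigma^*$, $$K(s)-d\le -\log_2 \operatorname{tr}(\rho R(s));$$ (ii) there exists a real $c>0$ such that for every density matrix $\rho\in\mathrm{Her}(N)$ and every $s\in\Sigma^*$, $$\operatorname{tr}(\rho R(s))\le c\,P(s).$$
   Context: $\Sigma^*=\{\lambda,0,1,00,01,\dots\}$ is the set of finite binary strings. $\mathrm{Her}(N)$ is the set of $N\times N$ complex Hermitian matrices; for $A,B\in\mathrm{Her}(N)$, $A\leqslant B$ means $B-A$ is positive semi-definite. A density matrix is $\rho\in\mathrm{Her}(N)$ with $0\leqslant\rho$ and $\operatorname{tr}\rho=1$. A semi-POVM on $\Sigma^*$ is a map $R:\Sigma^*\to\mathrm{Her}(N)$ with $0\leqslant R(s)$ for all $s$ and $\sum_{s\in\Sigma^*}R(s)\leqslant I$; it is a POVM on $\Sigma^*$ if moreover $\sum_{s}R(s)=I$. $\mathbb{C}_Q=\{a+ib: a,b\in\mathbb{Q}\}$. A map $F:\Sigma^*\to M_N(\mathbb{C})$ is computable if there is a total recursive $G:\Sigma^*\times\mathbb{N}\to M_N(\mathbb{C}_Q)$ with $\|F(s)-G(s,k)\|<2^{-k}$ (operator norm) for all $s,k$. A computer is a partial recursive function $C:\Sigma^*\to\Sigma^*$ whose domain is prefix-free; a computer $U$ is optimal if for every computer $C$ there is a constant $\mathrm{sim}(C)$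 such that whenever $C(p)$ is defined there is $p'$ with $U(p')=C(p)$ and $|p'|\le|p|+\mathrm{sim}(C)$. Fix an optimal computer $U$. $K(s)=\min\{|p|: U(p)=s\}$ (Kolmogorov complexity) and $P(s)=\sum_{U(p)=s}2^{-|p|}$. $-\log_2 0=\infty$. *)

theory Defs
  imports "HOL-Analysis.Analysis" "HOL-Library.Nat_Bijection" "HOL-Library.Sublist"
begin

datatype recf = Zero | Succ | Proj nat | Comp recf "recf list" | Prec recf recf | Mn recf

inductive eval :: "recf \<Rightarrow> nat list \<Rightarrow> nat \<Rightarrow> bool" where
  eval_Zero: "eval Zero xs 0"
| eval_Succ: "eval Succ (x # xs) (Suc x)"
| eval_Proj: "i < length xs \<Longrightarrow> eval (Proj i) xs (xs ! i)"
| eval_Comp: "length ys = length gs \<Longrightarrow> (\<forall>i<length gs. eval (gs ! i) xs (ys ! i))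
              \<Longrightarrow> eval f ys z \<Longrightarrow> eval (Comp f gs) xs z"
| eval_Prec0: "eval f xs y \<Longrightarrow> eval (Prec f g) (0 # xs) y"
| eval_PrecS: "eval (Prec f g) (n # xs) y \<Longrightarrow> eval g (n # y # xs) z
              \<Longrightarrow> eval (Prec f g) (Suc n # xs) z"
| eval_Mn: "eval f (n # xs) 0 \<Longrightarrow> (\<forall>m<n. \<exists>y. eval f (m # xs) y \<and> y > 0)
              \<Longrightarrow> eval (Mn f) xs n"

definition partial_recursive1 :: "(nat \<Rightarrow> nat option) \<Rightarrow> bool" where
  "partial_recursive1 \<phi> \<longleftrightarrow> (\<exists>f. \<forall>x y. \<phi> x = Some y \<longleftrightarrow> eval f [x] y)"

definition total_recursive :: "nat \<Rightarrow> (nat list \<Rightarrow> nat) \<Rightarrow> bool" where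
  "total_recursive k g \<longleftrightarrow> (\<exists>f. \<forall>xs. length xs = k \<longrightarrow> eval f xs (g xs))"

text \<open>Computable bijection of binary strings onto nat (bijective base-2 numeration).\<close>
fun str_code :: "bool list \<Rightarrow> nat" where
  "str_code [] = 0"
| "str_code (b # bs) = 2 * str_code bs + (if b then 2 else 1)"

definition computer :: "(bool list \<Rightarrow> bool list option) \<Rightarrow> bool" where
  "computer C \<longleftrightarrow>
     (\<exists>\<phi>. partial_recursive1 \<phi> \<and> (\<forall>p. \<phi> (str_code p) = map_option str_code (C p))) \<and>
     (\<forall>p q. C p \<noteq> None \<longrightarrow> C q \<noteq> None \<longrightarrow> prefix p q \<longrightarrow> p = q)"

definition optimal_computer :: "(bool list \<Rightarrow> bool list option) \<Rightarrow> bool" where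
  "optimal_computer U \<longleftrightarrow> computer U \<and>
     (\<forall>C. computer C \<longrightarrow> (\<exists>sim::nat. \<forall>p s. C p = Some s \<longrightarrow>
         (\<exists>p'. U p' = Some s \<and> length p' \<le> length p + sim)))"

definition Kc :: "(bool list \<Rightarrow> bool list option) \<Rightarrow> bool list \<Rightarrow> nat" where
  "Kc U s = (LEAST n. \<exists>p. U p = Some s \<and> length p = n)"

definition Pc :: "(bool list \<Rightarrow> bool list option) \<Rightarrow> bool list \<Rightarrow> real" where
  "Pc U s = (\<Sum>\<^sub>\<infinity>p\<in>{p. U p = Some s}. (1/2) ^ length p)"

definition neg_log2 :: "real \<Rightarrow> ereal" where
  "neg_log2 x = (if x = 0 then \<infinity> else ereal (- log 2 x))"

definition adjoint_mat :: "complex^'n^'n \<Rightarrow> complex^'n^'n" where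
  "adjoint_mat A = (\<chi> i j. cnj (A $ j $ i))"

definition hermitian :: "complex^'n^'n \<Rightarrow> bool" where
  "hermitian A \<longleftrightarrow> adjoint_mat A = A"

definition psd :: "complex^'n^'n \<Rightarrow> bool" where
  "psd A \<longleftrightarrow> hermitian A \<and> (\<forall>x::complex^'n. 0 \<le> Re (\<Sum>i\<in>UNIV. cnj (x $ i) * (A *v x) $ i))"

definition loewner_le :: "complex^'n^'n \<Rightarrow> complex^'n^'n \<Rightarrow> bool" where
  "loewner_le A B \<longleftrightarrow> hermitian A \<and> hermitian B \<and> psd (B - A)"

definition density_matrix :: "complex^'n^'n \<Rightarrow> bool" where
  "density_matrix \<rho> \<longleftrightarrow> hermitian \<rho> \<and> loewner_le 0 \<rho> \<and> trace \<rho> = 1"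

definition povm :: "(bool list \<Rightarrow> complex^'n^'n) \<Rightarrow> bool" where
  "povm R \<longleftrightarrow> (\<forall>s. hermitian (R s) \<and> loewner_le 0 (R s)) \<and> (R has_sum mat 1) UNIV"

definition opnorm :: "complex^'n^'n \<Rightarrow> real" where
  "opnorm A = onorm (\<lambda>x::complex^'n. A *v x)"

text \<open>Decoding of nat onto Gaussian rationals C_Q = {a+ib : a,b rational} (surjective).\<close>
definition decode_cq :: "nat \<Rightarrow> complex" where
  "decode_cq n = (case prod_decode n of (a, r) \<Rightarrow> case prod_decode r of (b, e) \<Rightarrow>
      Complex (of_int (int_decode a) / real (Suc e)) (of_int (int_decode b) / real (Suc e)))"

definition computable_mat_fun :: "(bool list \<Rightarrow> complex^'n^'n) \<Rightarrow> bool" where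
  "computable_mat_fun F \<longleftrightarrow> (\<exists>g :: 'n \<Rightarrow> 'n \<Rightarrow> nat list \<Rightarrow> nat.
      (\<forall>i j. total_recursive 2 (g i j)) \<and>
      (\<forall>s k. opnorm (F s - (\<chi> i j. decode_cq (g i j [str_code s, k]))) < (1/2) ^ k))"

end

(*
  From the computable approximations of R one computes, for every string s, a dyadic
  upper bound of tr R(s) whose errors are summable over all s.  Since the traces tr R(s) sum to N,
  code lengths l(s) with 2^-l(s) proportional to these upper bounds satisfy Kraft's inequality, and
  a Shannon-Fano-Elias construction turns them into a computable prefix-free code: a computer that
  outputs s on a program of length l(s) + 1.  Optimality of U then provides U-programs p for s of
  length l(s) + O(1), so that tr(rho R(s)) <= N tr R(s) <= c 2^-|p|.  This bound gives
  K(s) <= -log tr(rho R(s)) + d directly, and tr(rho R(s)) <= c P(s) because 2^-|p| <= P(s).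
*)

theory Submission
  imports Defs
begin

section \<open>Total recursive functions\<close>

inductive_cases eval_ZeroE: "eval Zero xs z"
inductive_cases eval_SuccE: "eval Succ xs z"
inductive_cases eval_ProjE: "eval (Proj i) xs z"
inductive_cases eval_CompE: "eval (Comp f gs) xs z"
inductive_cases eval_Prec0E: "eval (Prec f g) (0 # xs) z"
inductive_cases eval_PrecSE: "eval (Prec f g) (Suc n # xs) z"
inductive_cases eval_MnE: "eval (Mn f) xs z"

lemma eval_deterministic: "eval f xs y \<Longrightarrow> eval f xs z \<Longrightarrow> y = z"
proof (induction arbitrary: z rule: eval.induct)
  case (eval_Comp ys gs xs f z')
  from eval_Comp.prems obtain ys' where "length ys' = length gs"
    and "\<forall>i<length gs. eval (gs ! i) xs (ys' ! i)" and "eval f ys' z"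
    by (rule eval_CompE)
  moreover from this have "ys = ys'"
    using eval_Comp.hyps(1) eval_Comp.IH(1) by (auto intro: nth_equalityI)
  ultimately show ?case using eval_Comp.IH(2) by simp
next
  case (eval_Prec0 f xs y)
  then show ?case by (blast elim: eval_Prec0E)
next
  case (eval_PrecS f g n xs y z')
  from eval_PrecS.prems obtain y' where "eval (Prec f g) (n # xs) y'" "eval g (n # y' # xs) z"
    by (rule eval_PrecSE)
  then show ?case using eval_PrecS.IH by metis
next
  case (eval_Mn f n xs)
  from eval_Mn.prems have z: "eval f (z # xs) 0" "\<forall>m<z. \<exists>y. eval f (m # xs) y \<and> y > 0"
    by (meson eval_MnE)+
  show ?case
  proof (rule linorder_cases[of n z])
    assume "n < z"
    then obtain y where "eval f (n # xs) y" "y > 0" using z(2) by blast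
    then show ?thesis using eval_Mn.IH(1) by blast
  next
    assume "z < n"
    then show ?thesis using z(1) eval_Mn.IH(2) by blast
  qed
qed (fastforce elim: eval_ZeroE eval_SuccE eval_ProjE)+

lemma total_recursive_cong:
  "total_recursive k f \<Longrightarrow> (\<And>xs. length xs = k \<Longrightarrow> f xs = g xs) \<Longrightarrow> total_recursive k g"
  unfolding total_recursive_def by metis

lemma total_recursive_const: "total_recursive k (\<lambda>_. c)"
proof (induction c)
  case 0
  show ?case unfolding total_recursive_def by (auto intro: eval_Zero)
next
  case (Suc c)
  then obtain r where r: "\<forall>xs. length xs = k \<longrightarrow> eval r xs c"
    unfolding total_recursive_def by auto
  have "eval (Comp Succ [r]) xs (Suc c)" if "length xs = k" for xs
    by (rule eval_Comp[where ys="[c]"]) (auto intro: eval_Succ simp: r that)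
  then show ?case unfolding total_recursive_def by blast
qed

lemma total_recursive_proj: "i < k \<Longrightarrow> total_recursive k (\<lambda>xs. xs ! i)"
  unfolding total_recursive_def by (auto intro!: exI[of _ "Proj i"] eval_Proj)

lemma total_recursive_comp:
  assumes "total_recursive (length fs) F" and "\<forall>f\<in>set fs. total_recursive k f"
  shows "total_recursive k (\<lambda>xs. F (map (\<lambda>f. f xs) fs))"
proof -
  obtain r where r: "\<forall>xs. length xs = length fs \<longrightarrow> eval r xs (F xs)"
    using assms(1) unfolding total_recursive_def by auto
  obtain \<rho> where \<rho>: "\<forall>f\<in>set fs. \<forall>xs. length xs = k \<longrightarrow> eval (\<rho> f) xs (f xs)"
    using assms(2) unfolding total_recursive_def by metis
  have "eval (Comp r (map \<rho> fs)) xs (F (map (\<lambda>f. f xs) fs))" if "length xs = k" for xs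
    by (rule eval_Comp[where ys="map (\<lambda>f. f xs) fs"]) (use r \<rho> that in auto)
  then show ?thesis unfolding total_recursive_def by blast
qed

lemma total_recursive_comp1:
  "total_recursive 1 F \<Longrightarrow> total_recursive k f \<Longrightarrow> total_recursive k (\<lambda>xs. F [f xs])"
  using total_recursive_comp[where fs="[f]"] by simp

lemma total_recursive_comp2:
  "total_recursive 2 F \<Longrightarrow> total_recursive k f \<Longrightarrow> total_recursive k g \<Longrightarrow>
    total_recursive k (\<lambda>xs. F [f xs, g xs])"
  using total_recursive_comp[where fs="[f, g]"] by (simp add: numeral_2_eq_2)

lemma total_recursive_rec_nat:
  assumes "total_recursive k F" and "total_recursive (Suc (Suc k)) G"
  shows "total_recursive (Suc k) (\<lambda>xs. rec_nat (F (tl xs)) (\<lambda>n a. G (n # a # tl xs)) (hd xs))"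
proof -
  obtain f where f: "\<forall>xs. length xs = k \<longrightarrow> eval f xs (F xs)"
    using assms(1) unfolding total_recursive_def by auto
  obtain g where g: "\<forall>xs. length xs = Suc (Suc k) \<longrightarrow> eval g xs (G xs)"
    using assms(2) unfolding total_recursive_def by auto
  have "eval (Prec f g) (n # ys) (rec_nat (F ys) (\<lambda>n a. G (n # a # ys)) n)"
    if "length ys = k" for n ys
  proof (induction n)
    case 0
    show ?case using f that by (auto intro: eval_Prec0)
  next
    case (Suc n)
    show ?case using g that by (auto intro: eval_PrecS[OF Suc])
  qed
  then show ?thesis
    unfolding total_recursive_def by (intro exI[of _ "Prec f g"] allI impI) (auto simp: length_Suc_conv)
qed

lemma total_recursive_rec_nat2:
  assumes "total_recursive 1 F" and "total_recursive 3 G"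
  shows "total_recursive 2 (\<lambda>xs. rec_nat (F [xs ! 1]) (\<lambda>n a. G [n, a, xs ! 1]) (xs ! 0))"
  using total_recursive_rec_nat[of 1 F G] assms
  by (simp add: numeral_3_eq_3 numeral_2_eq_2)
    (erule total_recursive_cong, auto simp: length_Suc_conv)

lemma total_recursive_tl:
  assumes "total_recursive k f"
  shows "total_recursive (Suc k) (\<lambda>xs. f (tl xs))"
proof -
  have tl: "map (\<lambda>j. xs ! Suc j) [0..<k] = tl xs" if "length xs = Suc k" for xs :: "nat list"
    using that by (auto intro!: nth_equalityI simp: nth_tl)
  have "total_recursive (Suc k) (\<lambda>xs. f (map (\<lambda>h. h xs) (map (\<lambda>j xs. xs ! Suc j) [0..<k])))"
    by (rule total_recursive_comp) (use assms in \<open>auto intro: total_recursive_proj\<close>)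
  then show ?thesis by (rule total_recursive_cong) (simp add: comp_def tl)
qed

lemma total_recursive_Cons:
  assumes "total_recursive (Suc k) H" and "total_recursive k n"
  shows "total_recursive k (\<lambda>xs. H (n xs # xs))"
proof -
  have "total_recursive k (\<lambda>xs. H (map (\<lambda>h. h xs) (n # map (\<lambda>j xs. xs ! j) [0..<k])))"
    using assms by (intro total_recursive_comp) (auto intro: total_recursive_proj)
  then show ?thesis by (rule total_recursive_cong) (simp add: comp_def, metis map_nth)
qed

lemma total_recursive_Suc:
  assumes "total_recursive k f"
  shows "total_recursive k (\<lambda>xs. Suc (f xs))"
proof -
  have "total_recursive 1 (\<lambda>xs. Suc (xs ! 0))"
    unfolding total_recursive_def by (auto intro!: exI[of _ Succ] eval_Succ simp: length_Suc_conv)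
  from total_recursive_comp1[OF this assms] show ?thesis by simp
qed

lemma total_recursive_binop:
  assumes "total_recursive 2 (\<lambda>xs. F (xs ! 0) (xs ! 1))"
    and "total_recursive k f" and "total_recursive k g"
  shows "total_recursive k (\<lambda>xs. F (f xs) (g xs))"
  using total_recursive_comp2[OF assms] by simp

lemma total_recursive_add:
  assumes "total_recursive k f" and "total_recursive k g"
  shows "total_recursive k (\<lambda>xs. f xs + g xs)"
proof (rule total_recursive_binop[OF _ assms])
  have "rec_nat y (\<lambda>n a. Suc a) x = x + y" for x y :: nat
    by (induction x) auto
  then show "total_recursive 2 (\<lambda>xs. xs ! 0 + xs ! 1)"
    using total_recursive_rec_nat2[of "\<lambda>xs. xs ! 0" "\<lambda>xs. Suc (xs ! 1)"]
    by (simp add: total_recursive_proj total_recursive_Suc)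
qed

lemma total_recursive_mult:
  assumes "total_recursive k f" and "total_recursive k g"
  shows "total_recursive k (\<lambda>xs. f xs * g xs)"
proof (rule total_recursive_binop[OF _ assms])
  have "rec_nat 0 (\<lambda>n a. a + y) x = x * y" for x y :: nat
    by (induction x) auto
  then show "total_recursive 2 (\<lambda>xs. xs ! 0 * xs ! 1)"
    using total_recursive_rec_nat2[of "\<lambda>_. 0" "\<lambda>xs. xs ! 1 + xs ! 2"]
    by (simp add: total_recursive_proj total_recursive_add total_recursive_const)
qed

lemma total_recursive_diff:
  assumes "total_recursive k f" and "total_recursive k g"
  shows "total_recursive k (\<lambda>xs. f xs - g xs)"
proof (rule total_recursive_binop[OF _ assms])
  have "rec_nat 0 (\<lambda>n a. n) x = x - 1" for x :: nat
    by (cases x) auto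
  then have pred: "total_recursive 1 (\<lambda>xs. xs ! 0 - 1)"
    using total_recursive_rec_nat[of 0 "\<lambda>_. 0" "\<lambda>xs. xs ! 0"]
    by (simp add: total_recursive_proj total_recursive_const)
      (erule total_recursive_cong, auto simp: length_Suc_conv)
  have "rec_nat y (\<lambda>n a. a - 1) x = y - x" for x y :: nat
    by (induction x) auto
  then have "total_recursive 2 (\<lambda>xs. xs ! 1 - xs ! 0)"
    using total_recursive_rec_nat2[of "\<lambda>xs. xs ! 0" "\<lambda>xs. xs ! 1 - 1"]
      total_recursive_comp1[OF pred total_recursive_proj[of 1 3]]
    by (simp add: total_recursive_proj)
  then show "total_recursive 2 (\<lambda>xs. xs ! 0 - xs ! 1)"
    using total_recursive_binop[OF _ total_recursive_proj[of 1 2] total_recursive_proj[of 0 2]]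
    by simp
qed

lemma total_recursive_power:
  assumes "total_recursive k f" and "total_recursive k g"
  shows "total_recursive k (\<lambda>xs. f xs ^ g xs)"
proof -
  have "rec_nat 1 (\<lambda>n a. a * y) x = y ^ x" for x y :: nat
    by (induction x) (simp_all add: mult.commute)
  then have "total_recursive 2 (\<lambda>xs. xs ! 1 ^ xs ! 0)"
    using total_recursive_rec_nat2[of "\<lambda>_. 1" "\<lambda>xs. xs ! 1 * xs ! 2"]
    by (simp add: total_recursive_proj total_recursive_mult total_recursive_const)
  from total_recursive_binop[OF this assms(2,1)] show ?thesis .
qed

definition recursive_pred :: "nat \<Rightarrow> (nat list \<Rightarrow> bool) \<Rightarrow> bool" where
  "recursive_pred k P \<longleftrightarrow> total_recursive k (\<lambda>xs. of_bool (P xs))"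

lemma recursive_pred_le:
  "total_recursive k f \<Longrightarrow> total_recursive k g \<Longrightarrow> recursive_pred k (\<lambda>xs. f xs \<le> g xs)"
proof -
  assume "total_recursive k f" "total_recursive k g"
  then have "total_recursive k (\<lambda>xs. 1 - (f xs - g xs))"
    by (intro total_recursive_diff total_recursive_const)
  then show ?thesis unfolding recursive_pred_def by (rule total_recursive_cong) auto
qed

lemma recursive_pred_conj:
  "recursive_pred k P \<Longrightarrow> recursive_pred k Q \<Longrightarrow> recursive_pred k (\<lambda>xs. P xs \<and> Q xs)"
  unfolding recursive_pred_def by (drule (1) total_recursive_mult) (simp add: of_bool_conj)

lemma recursive_pred_eq:
  "total_recursive k f \<Longrightarrow> total_recursive k g \<Longrightarrow> recursive_pred k (\<lambda>xs. f xs = g xs)"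
  using recursive_pred_conj[OF recursive_pred_le recursive_pred_le, of k f g g f]
  by (simp add: eq_iff)

lemma total_recursive_If:
  assumes "recursive_pred k P" and "total_recursive k f" and "total_recursive k g"
  shows "total_recursive k (\<lambda>xs. if P xs then f xs else g xs)"
proof -
  have "total_recursive k (\<lambda>xs. of_bool (P xs) * f xs + (1 - of_bool (P xs)) * g xs)"
    using assms unfolding recursive_pred_def
    by (intro total_recursive_add total_recursive_mult total_recursive_diff total_recursive_const)
  then show ?thesis by (rule total_recursive_cong) simp
qed

lemma total_recursive_sum_lessThan:
  assumes f: "total_recursive (Suc k) f" and n: "total_recursive k n"
  shows "total_recursive k (\<lambda>xs. \<Sum>i<n xs. f (i # xs))"
proof -
  have drop2: "map (\<lambda>j. zs ! Suc (Suc j)) [0..<k] = drop 2 zs"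
    if "length zs = Suc (Suc k)" for zs :: "nat list"
    using that by (auto intro!: nth_equalityI)
  have "total_recursive (Suc (Suc k)) (\<lambda>zs. f (map (\<lambda>h. h zs) ((\<lambda>zs. zs ! 0) #
      map (\<lambda>j zs. zs ! Suc (Suc j)) [0..<k])))"
    by (rule total_recursive_comp) (use f in \<open>auto intro: total_recursive_proj\<close>)
  then have "total_recursive (Suc (Suc k)) (\<lambda>zs. f (zs ! 0 # drop 2 zs))"
    by (rule total_recursive_cong) (simp add: comp_def drop2)
  then have step: "total_recursive (Suc (Suc k)) (\<lambda>zs. zs ! 1 + f (zs ! 0 # drop 2 zs))"
    by (intro total_recursive_add total_recursive_proj) simp_all
  have "rec_nat 0 (\<lambda>m a. a + f (m # ys)) i = (\<Sum>j<i. f (j # ys))" for i ys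
    by (induction i) auto
  then have "total_recursive (Suc k) (\<lambda>xs. \<Sum>j<hd xs. f (j # tl xs))"
    using total_recursive_rec_nat[OF total_recursive_const[of k 0] step] by simp
  from total_recursive_Cons[OF this n] show ?thesis by simp
qed

lemma total_recursive_sum:
  "finite I \<Longrightarrow> (\<And>i. i \<in> I \<Longrightarrow> total_recursive k (f i)) \<Longrightarrow>
    total_recursive k (\<lambda>xs. \<Sum>i\<in>I. f i xs)"
proof (induction I rule: finite_induct)
  case empty
  then show ?case by (simp add: total_recursive_const)
next
  case (insert i I)
  then show ?case by (simp add: total_recursive_add)
qed

lemma count_initial_segment:
  assumes "k \<le> n" and "\<And>j. j < n \<Longrightarrow> P j \<longleftrightarrow> j < k"
  shows "(\<Sum>j<n. of_bool (P j) :: nat) = k"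
proof -
  have "{..<n} \<inter> {j. P j} = {..<k}" using assms by auto
  then show ?thesis by simp
qed

lemma count_downward_closed:
  fixes P :: "nat \<Rightarrow> bool" and D :: nat
  assumes "\<And>i j. i \<le> j \<Longrightarrow> P j \<Longrightarrow> P i"
  defines "c \<equiv> (\<Sum>j<D. of_bool (P j)) :: nat"
  shows "c \<le> D" and "\<And>j. j < c \<Longrightarrow> P j" and "c < D \<Longrightarrow> \<not> P c"
proof -
  define k where "k = (if \<forall>j<D. P j then D else LEAST j. \<not> P j)"
  have "k \<le> D"
    unfolding k_def by (auto intro: Least_le[THEN order_trans] simp: not_less)
  moreover have "P j \<longleftrightarrow> j < k" if "j < D" for j
  proof (cases "\<forall>j<D. P j")
    case False
    then have "\<not> P k" using LeastI[of "\<lambda>j. \<not> P j"] unfolding k_def by auto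
    moreover have "P j" if "j < k" for j using that False not_less_Least unfolding k_def by auto
    ultimately show ?thesis using assms(1) by (meson not_less)
  qed (use that k_def in auto)
  ultimately have "c = k" unfolding c_def by (rule count_initial_segment)
  then show "c \<le> D" and "\<And>j. j < c \<Longrightarrow> P j" and "c < D \<Longrightarrow> \<not> P c"
    using \<open>k \<le> D\<close> \<open>\<And>j. j < D \<Longrightarrow> P j \<longleftrightarrow> j < k\<close> by auto
qed

lemma div_eq_count:
  assumes "0 < y"
  shows "x div y = (\<Sum>j<x. of_bool (Suc j * y \<le> x))"
proof (rule count_initial_segment[symmetric])
  show "x div y \<le> x" by (rule div_le_dividend)
  show "Suc j * y \<le> x \<longleftrightarrow> j < x div y" for j
    using less_eq_div_iff_mult_less_eq[OF assms, of "Suc j" x] by (simp only: Suc_le_eq)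
qed

lemma total_recursive_div:
  assumes "total_recursive k f" and "total_recursive k g"
  shows "total_recursive k (\<lambda>xs. f xs div g xs)"
proof -
  have "recursive_pred (Suc k) (\<lambda>ys. Suc (ys ! 0) * g (tl ys) \<le> f (tl ys))"
    using assms by (intro recursive_pred_le total_recursive_mult total_recursive_Suc
        total_recursive_proj total_recursive_tl) simp_all
  from total_recursive_sum_lessThan[OF this[unfolded recursive_pred_def] assms(1)]
  have "total_recursive k (\<lambda>xs. if g xs = 0 then 0 else \<Sum>j<f xs. of_bool (Suc j * g xs \<le> f xs))"
    by (intro total_recursive_If recursive_pred_eq assms(2) total_recursive_const) simp
  then show ?thesis by (rule total_recursive_cong) (simp add: div_eq_count)
qed

lemma total_recursive_mod:
  assumes "total_recursive k f" and "total_recursive k g"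
  shows "total_recursive k (\<lambda>xs. f xs mod g xs)"
proof -
  have "total_recursive k (\<lambda>xs. f xs - g xs * (f xs div g xs))"
    using assms by (intro total_recursive_diff total_recursive_mult total_recursive_div)
  then show ?thesis by (simp add: minus_mult_div_eq_mod)
qed

lemma recursive_pred_not: "recursive_pred k P \<Longrightarrow> recursive_pred k (\<lambda>xs. \<not> P xs)"
  unfolding recursive_pred_def
  by (drule total_recursive_diff[OF total_recursive_const[of k 1]])
    (erule total_recursive_cong, simp)

lemma recursive_pred_even: "total_recursive k f \<Longrightarrow> recursive_pred k (\<lambda>xs. even (f xs))"
  using recursive_pred_eq[OF total_recursive_mod[OF _ total_recursive_const[of k 2]]
      total_recursive_const[of k 0]]
  by (simp add: even_iff_mod_2_eq_zero)

text \<open>The inverse is computed by unbounded search (\<open>Mn\<close>) for a zero of \<open>\<lambda>y. [c y \<noteq> n]\<close>.\<close>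

lemma partial_recursive1_inv:
  assumes c: "total_recursive 1 (\<lambda>xs. c (xs ! 0))" and "inj c"
  shows "partial_recursive1 (\<lambda>n. if n \<in> range c then Some (inv c n) else None)"
proof -
  have "total_recursive 2 (\<lambda>ys. of_bool (c (ys ! 0) \<noteq> ys ! 1))"
    using recursive_pred_not[OF recursive_pred_eq[OF total_recursive_comp1[OF c
          total_recursive_proj[of 0 2]] total_recursive_proj[of 1 2]]]
    by (simp add: recursive_pred_def)
  then obtain h where h: "\<And>ys. length ys = 2 \<Longrightarrow> eval h ys (of_bool (c (ys ! 0) \<noteq> ys ! 1))"
    unfolding total_recursive_def by blast
  have h_iff: "eval h [y, n] v \<longleftrightarrow> v = of_bool (c y \<noteq> n)" for y n v
    using h[of "[y, n]"] eval_deterministic[of h "[y, n]"] by auto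
  have search: "eval (Mn h) [n] y \<longleftrightarrow> c y = n" for n y
  proof
    assume "eval (Mn h) [n] y"
    then have "eval h [y, n] 0" by (auto elim: eval_MnE)
    then show "c y = n" using h_iff by simp
  next
    assume y: "c y = n"
    show "eval (Mn h) [n] y"
    proof (rule eval_Mn)
      show "eval h [y, n] 0" using h_iff y by simp
      have "c m \<noteq> n" if "m < y" for m
        using that y injD[OF \<open>inj c\<close>, of m y] by auto
      then show "\<forall>m<y. \<exists>v. eval h [m, n] v \<and> v > 0" using h_iff by simp
    qed
  qed
  have "(if n \<in> range c then Some (inv c n) else None) = Some y \<longleftrightarrow> c y = n" for n y
    using \<open>inj c\<close> by (auto simp: inv_f_f inj_eq)
  then show ?thesis
    unfolding partial_recursive1_def by (intro exI[of _ "Mn h"]) (simp add: search)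
qed

definition triangle_root :: "nat \<Rightarrow> nat" where
  "triangle_root n = (\<Sum>j<n. of_bool (triangle (Suc j) \<le> n))"

lemma prod_decode_triangle_root:
  "prod_decode n = (n - triangle (triangle_root n), triangle_root n - (n - triangle (triangle_root n)))"
proof -
  obtain a b where ab: "prod_decode n = (a, b)" by (cases "prod_decode n")
  have n: "n = triangle (a + b) + a"
    using prod_decode_inverse[of n] ab by (simp add: prod_encode_def)
  have mono: "triangle i \<le> triangle j" if "i \<le> j" for i j
    unfolding triangle_def using that by (intro div_le_mono mult_le_mono) auto
  have "triangle_root n = a + b" unfolding triangle_root_def
  proof (rule count_initial_segment)
    have "k \<le> triangle k" for k by (induction k) auto
    from this[of "a + b"] show "a + b \<le> n" using n by linarith
    show "triangle (Suc j) \<le> n \<longleftrightarrow> j < a + b" for j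
    proof
      assume j: "triangle (Suc j) \<le> n"
      show "j < a + b"
      proof (rule ccontr)
        assume "\<not> j < a + b"
        then have "triangle (Suc (a + b)) \<le> triangle (Suc j)" using mono[of "a + b" j] by simp
        then show False using j n by simp
      qed
    next
      assume "j < a + b"
      then show "triangle (Suc j) \<le> n" using mono[of "Suc j" "a + b"] n by simp
    qed
  qed
  moreover have "n - triangle (a + b) = a" using n by simp
  ultimately show ?thesis using ab by simp
qed

lemma total_recursive_triangle_root:
  assumes "total_recursive k h"
  shows "total_recursive k (\<lambda>xs. triangle_root (h xs))"
proof -
  have "total_recursive (Suc k) (\<lambda>ys. Suc (ys ! 0) * Suc (Suc (ys ! 0)) div 2)"
    by (intro total_recursive_div total_recursive_mult total_recursive_Suc total_recursive_proj
        total_recursive_const) simp_all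
  from recursive_pred_le[OF this total_recursive_tl[OF assms]]
  have "total_recursive (Suc k) (\<lambda>ys. of_bool (Suc (ys ! 0) * Suc (Suc (ys ! 0)) div 2 \<le> h (tl ys)))"
    by (simp add: recursive_pred_def)
  from total_recursive_sum_lessThan[OF this assms]
  show ?thesis by (simp add: triangle_root_def triangle_def)
qed

lemma total_recursive_prod_decode:
  assumes "total_recursive k h"
  shows "total_recursive k (\<lambda>xs. fst (prod_decode (h xs)))"
    and "total_recursive k (\<lambda>xs. snd (prod_decode (h xs)))"
proof -
  note root = total_recursive_triangle_root[OF assms]
  have "total_recursive k (\<lambda>xs. h xs - triangle (triangle_root (h xs)))"
    unfolding triangle_def
    by (intro total_recursive_diff total_recursive_div total_recursive_mult total_recursive_Suc
        total_recursive_const root assms)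
  then show "total_recursive k (\<lambda>xs. fst (prod_decode (h xs)))"
    and "total_recursive k (\<lambda>xs. snd (prod_decode (h xs)))"
    by (simp_all add: prod_decode_triangle_root total_recursive_diff root)
qed

section \<open>Binary strings\<close>

lemma inj_str_code: "inj str_code"
proof (rule injI)
  show "str_code xs = str_code ys \<Longrightarrow> xs = ys" for xs ys
  proof (induction xs arbitrary: ys)
    case Nil
    then show ?case by (cases ys) (auto split: if_splits)
  next
    case (Cons a xs)
    then obtain b ys' where ys: "ys = b # ys'" by (cases ys) (auto split: if_splits)
    have "even (str_code (c # cs)) \<longleftrightarrow> c" for c cs by simp
    with Cons.prems ys have "a = b" by metis
    with Cons ys show ?case by auto
  qed
qed

lemma surj_str_code: "surj str_code"
proof -
  have "n \<in> range str_code" for n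
  proof (induction n rule: less_induct)
    case (less n)
    show ?case
    proof (cases n)
      case 0
      then show ?thesis by (metis rangeI str_code.simps(1))
    next
      case (Suc m)
      then obtain xs where "str_code xs = m div 2" using less by (metis imageE div_le_dividend le_imp_less_Suc)
      then have "str_code (even n # xs) = n" using Suc by auto
      then show ?thesis by (metis rangeI)
    qed
  qed
  then show ?thesis by blast
qed

definition str_decode :: "nat \<Rightarrow> bool list" where
  "str_decode = inv str_code"

lemma str_code_decode [simp]: "str_code (str_decode n) = n"
  unfolding str_decode_def by (simp add: surj_f_inv_f[OF surj_str_code])

lemma str_decode_code [simp]: "str_decode (str_code s) = s"
  unfolding str_decode_def by (simp add: inv_f_f[OF inj_str_code])

lemma inj_str_decode: "inj str_decode"
  by (metis injI str_code_decode)

fun low_bits :: "nat \<Rightarrow> nat \<Rightarrow> bool list" where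
  "low_bits 0 a = []"
| "low_bits (Suc m) a = odd (a div 2 ^ m) # low_bits m a"

lemma length_low_bits [simp]: "length (low_bits m a) = m"
  by (induction m) auto

lemma low_bits_add: "low_bits (d + m) a = low_bits m (a div 2 ^ d) @ low_bits d a"
  by (induction m) (auto simp: power_add div_mult2_eq[symmetric] mult.commute)

lemma low_bits_eq_imp_mod_eq: "low_bits m a = low_bits m c \<Longrightarrow> a mod 2 ^ m = c mod 2 ^ m"
proof (induction m)
  case (Suc m)
  then have "odd (a div 2 ^ m) \<longleftrightarrow> odd (c div 2 ^ m)" and "a mod 2 ^ m = c mod 2 ^ m"
    by simp_all
  then have "a div 2 ^ m mod 2 = c div 2 ^ m mod 2" and "a mod 2 ^ m = c mod 2 ^ m"
    by (simp_all add: mod2_eq_if)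
  moreover have split: "x mod 2 ^ Suc m = 2 ^ m * (x div 2 ^ m mod 2) + x mod 2 ^ m" for x :: nat
    using mod_mult2_eq[of x "2 ^ m" 2] by (simp add: mult.commute)
  ultimately show ?case by (simp only: split)
qed simp

lemma prefix_low_bits:
  assumes "a < 2 ^ m" and "a' < 2 ^ m'" and "prefix (low_bits m a) (low_bits m' a')"
  shows "m \<le> m'" and "a = a' div 2 ^ (m' - m)"
proof -
  show "m \<le> m'" using prefix_length_le[OF assms(3)] by simp
  define d where "d = m' - m"
  have m': "m' = d + m" using \<open>m \<le> m'\<close> d_def by simp
  have "prefix (low_bits m a) (low_bits m (a' div 2 ^ d) @ low_bits d a')"
    using assms(3) m' low_bits_add by metis
  then have "low_bits m a = low_bits m (a' div 2 ^ d)"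
    by (auto simp: prefix_def)
  then have "a mod 2 ^ m = (a' div 2 ^ d) mod 2 ^ m" by (rule low_bits_eq_imp_mod_eq)
  moreover have "a' div 2 ^ d < 2 ^ m"
    using assms(2) m' by (simp add: div_less_iff_less_mult power_add mult.commute)
  ultimately show "a = a' div 2 ^ (m' - m)" using assms(1) d_def by simp
qed

lemma total_recursive_str_code_low_bits:
  assumes "total_recursive k m" and "total_recursive k a"
  shows "total_recursive k (\<lambda>xs. str_code (low_bits (m xs) (a xs)))"
proof -
  have "str_code (low_bits n x) = rec_nat 0 (\<lambda>i c. 2 * c + (x div 2 ^ i mod 2 + 1)) n" for n x
    by (induction n) (auto simp: odd_iff_mod_2_eq_one)
  moreover have "total_recursive 3 (\<lambda>zs. 2 * zs ! 1 + (zs ! 2 div 2 ^ zs ! 0 mod 2 + 1))"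
    by (intro total_recursive_add total_recursive_mult total_recursive_mod total_recursive_div
        total_recursive_power total_recursive_const total_recursive_proj) simp_all
  ultimately have "total_recursive 2 (\<lambda>xs. str_code (low_bits (xs ! 0) (xs ! 1)))"
    using total_recursive_rec_nat2[of "\<lambda>_. 0" "\<lambda>zs. 2 * zs ! 1 + (zs ! 2 div 2 ^ zs ! 0 mod 2 + 1)"]
      total_recursive_const by simp
  from total_recursive_binop[OF this assms] show ?thesis .
qed

section \<open>Prefix-free codes\<close>

definition prefix_free :: "'a list set \<Rightarrow> bool" where
  "prefix_free A \<longleftrightarrow> (\<forall>p\<in>A. \<forall>q\<in>A. prefix p q \<longrightarrow> p = q)"

lemma prefix_free_subset: "prefix_free B \<Longrightarrow> A \<subseteq> B \<Longrightarrow> prefix_free A"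
  unfolding prefix_free_def by blast

lemma prefix_free_dom_computer: "computer C \<Longrightarrow> prefix_free (dom C)"
  unfolding computer_def prefix_free_def by blast

lemma prefix_free_vimage_Cons: "prefix_free F \<Longrightarrow> prefix_free (Cons b -` F)"
  unfolding prefix_free_def
proof (intro ballI impI)
  fix p q assume "\<forall>p\<in>F. \<forall>q\<in>F. prefix p q \<longrightarrow> p = q" "p \<in> Cons b -` F" "q \<in> Cons b -` F" "prefix p q"
  moreover from \<open>prefix p q\<close> have "prefix (b # p) (b # q)" by simp
  ultimately have "b # p = b # q" by blast
  then show "p = q" by simp
qed

lemma sum_split_first_bit:
  fixes F :: "bool list set"
  assumes "finite F" and "[] \<notin> F"
  shows "(\<Sum>p\<in>F. (1/2::real) ^ length p)
    = (\<Sum>p\<in>Cons True -` F. (1/2) ^ length p) / 2 + (\<Sum>p\<in>Cons False -` F. (1/2) ^ length p) / 2"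
proof -
  have fin: "finite (Cons b -` F)" for b
    using assms(1) by (rule finite_vimageI) simp
  have F: "F = Cons True ` (Cons True -` F) \<union> Cons False ` (Cons False -` F)"
  proof
    show "F \<subseteq> Cons True ` (Cons True -` F) \<union> Cons False ` (Cons False -` F)"
    proof
      fix p assume "p \<in> F"
      with assms(2) obtain b q where "p = b # q" by (cases p) auto
      with \<open>p \<in> F\<close> show "p \<in> Cons True ` (Cons True -` F) \<union> Cons False ` (Cons False -` F)"
        by (cases b) auto
    qed
  qed auto
  have "(\<Sum>p\<in>F. (1/2::real) ^ length p)
      = (\<Sum>p\<in>Cons True ` (Cons True -` F). (1/2) ^ length p)
        + (\<Sum>p\<in>Cons False ` (Cons False -` F). (1/2) ^ length p)"
    by (subst F) (rule sum.union_disjoint, auto simp: fin assms(1))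
  moreover have "(\<Sum>p\<in>Cons b ` (Cons b -` F). (1/2::real) ^ length p)
      = (\<Sum>p\<in>Cons b -` F. (1/2) ^ length p) / 2" for b
    by (subst sum.reindex) (simp_all add: sum_divide_distrib)
  ultimately show ?thesis by (simp only:)
qed

lemma kraft_inequality:
  fixes F :: "bool list set"
  assumes "finite F" and "prefix_free F"
  shows "(\<Sum>p\<in>F. (1/2::real) ^ length p) \<le> 1"
proof -
  have "(\<Sum>p\<in>F. (1/2::real) ^ length p) \<le> 1"
    if "finite F" "prefix_free F" "\<forall>p\<in>F. length p \<le> n" for n and F :: "bool list set"
    using that
  proof (induction n arbitrary: F)
    case 0
    then have "F \<subseteq> {[]}" by auto
    then show ?case using subset_singletonD by fastforce
  next
    case (Suc n)
    show ?case
    proof (cases "[] \<in> F")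
      case True
      have "q = []" if "q \<in> F" for q
        using Suc.prems(2) True that unfolding prefix_free_def by (metis Nil_prefix)
      with True have "F = {[]}" by blast
      then show ?thesis by simp
    next
      case False
      have half: "(\<Sum>p\<in>Cons b -` F. (1/2::real) ^ length p) \<le> 1" for b
        using Suc.prems by (intro Suc.IH finite_vimageI prefix_free_vimage_Cons) auto
      show ?thesis
        unfolding sum_split_first_bit[OF Suc.prems(1) False] using half[of True] half[of False] by linarith
    qed
  qed
  moreover have "\<forall>p\<in>F. length p \<le> Max (length ` F)" using assms(1) by simp
  ultimately show ?thesis using assms by blast
qed

lemma prefix_free_summable:
  fixes A :: "bool list set"
  assumes "prefix_free A"
  shows "(\<lambda>p. (1/2::real) ^ length p) summable_on A"
proof (rule nonneg_bdd_above_summable_on)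
  show "bdd_above (sum (\<lambda>p. (1/2::real) ^ length p) ` {F. F \<subseteq> A \<and> finite F})"
    by (intro bdd_aboveI[of _ 1]) (auto intro!: kraft_inequality prefix_free_subset[OF assms])
qed simp

lemma Pc_ge_program:
  assumes "computer U" and "U p = Some s"
  shows "(1/2::real) ^ length p \<le> Pc U s"
proof -
  have "prefix_free {p. U p = Some s}"
    using prefix_free_dom_computer[OF assms(1)] by (rule prefix_free_subset) auto
  from finite_sum_le_infsum[OF prefix_free_summable[OF this], of "{p}"]
  show ?thesis using assms(2) unfolding Pc_def by simp
qed

lemma neg_log2_ge:
  assumes "0 \<le> t" and "t \<le> 2 ^ d * (1/2) ^ k"
  shows "ereal (real k) - ereal (real d) \<le> neg_log2 t"
proof (cases "t = 0")
  case False
  then have "log 2 t \<le> log 2 (2 powr (real d - real k))"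
    using assms by (simp add: powr_diff powr_realpow power_one_over)
  then show ?thesis using False by (simp add: neg_log2_def)
qed (simp add: neg_log2_def)

lemma Kc_le_length: "U p = Some s \<Longrightarrow> Kc U s \<le> length p"
  unfolding Kc_def by (rule Least_le) blast

lemma div_round_up_bounds:
  fixes z q :: nat
  assumes "q > 0"
  shows "z \<le> (z + q - 1) div q * q" and "(z + q - 1) div q * q < z + q"
proof -
  have "(z + q - 1) div q * q + (z + q - 1) mod q = z + q - 1" by simp
  moreover have "(z + q - 1) mod q < q" using assms by simp
  ultimately show "z \<le> (z + q - 1) div q * q" and "(z + q - 1) div q * q < z + q"
    using assms by linarith+
qed

lemma ceiling_divide_nat:
  fixes p q :: nat
  assumes "q > 0"
  shows "\<lceil>real p / real q\<rceil> = int ((p + q - 1) div q)"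
proof (rule ceiling_unique)
  note bounds = div_round_up_bounds[OF assms, of p]
  have "real p \<le> real ((p + q - 1) div q) * real q"
    using bounds(1) by (simp only: of_nat_le_iff of_nat_mult[symmetric])
  then show "real p / real q \<le> real_of_int (int ((p + q - 1) div q))"
    using assms by (simp add: divide_le_eq)
  have "real ((p + q - 1) div q) * real q < real p + real q"
    using bounds(2) by (simp only: of_nat_less_iff of_nat_mult[symmetric] of_nat_add[symmetric])
  then show "real_of_int (int ((p + q - 1) div q)) - 1 < real p / real q"
    using assms by (simp add: less_divide_eq algebra_simps)
qed

text \<open>Shannon-Fano-Elias coding of a sequence of lengths \<open>l\<close> with Kraft sum at most 1: the
  codeword of \<open>x\<close> consists of the first \<open>l x + 1\<close> binary digits of the partial Kraft sum
  \<open>\<Sum>t<x. 2 ^ - l t\<close>, rounded up.  All terms involved are multiples of \<open>2 ^ - E x\<close>, so the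
  codeword is computed exactly in integer arithmetic.\<close>

definition sf_numerator :: "(nat \<Rightarrow> nat) \<Rightarrow> (nat \<Rightarrow> nat) \<Rightarrow> nat \<Rightarrow> nat" where
  "sf_numerator l E x = (\<Sum>t<x. 2 ^ (E x - l t))"

definition sf_point :: "(nat \<Rightarrow> nat) \<Rightarrow> (nat \<Rightarrow> nat) \<Rightarrow> nat \<Rightarrow> nat" where
  "sf_point l E x =
    (sf_numerator l E x + 2 ^ (E x - Suc (l x)) - 1) div 2 ^ (E x - Suc (l x))"

definition sf_codeword :: "(nat \<Rightarrow> nat) \<Rightarrow> (nat \<Rightarrow> nat) \<Rightarrow> nat \<Rightarrow> bool list" where
  "sf_codeword l E x = low_bits (Suc (l x)) (sf_point l E x)"

lemma length_sf_codeword [simp]: "length (sf_codeword l E x) = Suc (l x)"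
  by (simp add: sf_codeword_def)

locale shannon_fano =
  fixes l E :: "nat \<Rightarrow> nat"
  assumes length_le_precision: "t < x \<Longrightarrow> l t \<le> E x"
    and codeword_length_le_precision: "Suc (l x) \<le> E x"
    and kraft: "(\<Sum>t\<le>x. (1/2::real) ^ l t) \<le> 1"
begin

definition kraft_sum :: "nat \<Rightarrow> real" where
  "kraft_sum x = (\<Sum>t<x. (1/2) ^ l t)"

definition point :: "nat \<Rightarrow> real" where
  "point x = sf_point l E x / 2 ^ Suc (l x)"

lemma sf_numerator_eq: "real (sf_numerator l E x) = kraft_sum x * 2 ^ E x"
proof -
  have "real (2 ^ (E x - l t)) = (1/2) ^ l t * 2 ^ E x" if "t < x" for t
  proof -
    have "real (2 ^ (E x - l t)) = (2::real) ^ (E x - l t)" by simp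
    also have "\<dots> = 2 ^ E x / 2 ^ l t"
      using length_le_precision[OF that] by (simp add: power_diff)
    finally show ?thesis by (simp add: power_one_over)
  qed
  then show ?thesis
    unfolding sf_numerator_def kraft_sum_def by (simp add: sum_distrib_right)
qed

lemma kraft_sum_step:
  assumes "t < u"
  shows "kraft_sum t + (1/2) ^ l t \<le> kraft_sum u"
proof -
  have "kraft_sum t + (1/2) ^ l t = (\<Sum>i<Suc t. (1/2) ^ l i)" by (simp add: kraft_sum_def)
  also have "\<dots> \<le> kraft_sum u" unfolding kraft_sum_def by (rule sum_mono2) (use assms in auto)
  finally show ?thesis .
qed

lemma kraft_sum_le: "kraft_sum x + (1/2) ^ l x \<le> 1"
  using kraft[of x] by (simp add: kraft_sum_def lessThan_Suc_atMost[symmetric])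

lemma point_bounds: "kraft_sum x \<le> point x" "point x < kraft_sum x + (1/2) ^ Suc (l x)"
proof -
  define d where "d = E x - Suc (l x)"
  have "E x = d + Suc (l x)" using codeword_length_le_precision[of x] by (simp add: d_def)
  then have E: "(2::real) ^ E x = 2 ^ d * 2 ^ Suc (l x)" by (simp only: power_add)
  have sf_point_eq: "sf_point l E x = (sf_numerator l E x + 2 ^ d - 1) div 2 ^ d"
    unfolding sf_point_def d_def ..
  have "(0::nat) < 2 ^ d" by simp
  note bounds = div_round_up_bounds[OF this, of "sf_numerator l E x", folded sf_point_eq]
  have "real (sf_numerator l E x) \<le> real (sf_point l E x * 2 ^ d)"
    using bounds(1) by (simp only: of_nat_le_iff)
  then have "2 ^ d * (kraft_sum x * 2 ^ Suc (l x)) \<le> 2 ^ d * real (sf_point l E x)"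
    by (simp add: sf_numerator_eq E algebra_simps)
  then show "kraft_sum x \<le> point x"
    unfolding point_def by (simp add: field_simps)
  have "real (sf_point l E x * 2 ^ d) < real (sf_numerator l E x + 2 ^ d)"
    using bounds(2) by (simp only: of_nat_less_iff)
  then have "2 ^ d * real (sf_point l E x) < 2 ^ d * (kraft_sum x * 2 ^ Suc (l x) + 1)"
    by (simp add: sf_numerator_eq E algebra_simps)
  then have "real (sf_point l E x) < kraft_sum x * 2 ^ Suc (l x) + 1"
    by (rule mult_less_cancel_left_pos[THEN iffD1, rotated]) simp
  then show "point x < kraft_sum x + (1/2) ^ Suc (l x)"
    unfolding point_def by (simp add: field_simps)
qed

lemma sf_point_less: "sf_point l E x < 2 ^ Suc (l x)"
proof -
  have "point x + (1/2) ^ Suc (l x) < kraft_sum x + (1/2) ^ l x"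
    using point_bounds(2)[of x] by simp
  also have "\<dots> \<le> 1" by (rule kraft_sum_le)
  finally have "real (sf_point l E x) + 1 < 2 ^ Suc (l x)"
    unfolding point_def by (simp add: field_simps)
  then have "real (sf_point l E x) < real ((2::nat) ^ Suc (l x))" by simp
  then show ?thesis by (simp only: of_nat_less_iff)
qed

lemma prefix_sf_codeword_point:
  assumes "prefix (sf_codeword l E x) (sf_codeword l E y)"
  shows "point x \<le> point y" and "point y < point x + (1/2) ^ Suc (l x)"
proof -
  note p = prefix_low_bits[OF sf_point_less sf_point_less assms[unfolded sf_codeword_def]]
  define d where "d = l y - l x"
  have y: "Suc (l y) = d + Suc (l x)" using p(1) by (simp add: d_def)
  have x: "sf_point l E x = sf_point l E y div 2 ^ d" using p(2) by (simp add: d_def)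
  have "sf_point l E x * 2 ^ d \<le> sf_point l E y"
    unfolding x by (rule div_times_less_eq_dividend)
  then have "real (sf_point l E x * 2 ^ d) \<le> real (sf_point l E y)"
    by (simp only: of_nat_le_iff)
  then show "point x \<le> point y"
    unfolding point_def y by (simp add: power_add field_simps)
  have "sf_point l E y mod 2 ^ d < 2 ^ d" by simp
  then have "sf_point l E y < sf_point l E y div 2 ^ d * 2 ^ d + 2 ^ d"
    using div_mult_mod_eq[of "sf_point l E y" "2 ^ d"] by linarith
  then have "sf_point l E y < (sf_point l E x + 1) * 2 ^ d"
    unfolding x by (simp add: algebra_simps)
  then have "real (sf_point l E y) < real ((sf_point l E x + 1) * 2 ^ d)"
    by (simp only: of_nat_less_iff)
  then show "point y < point x + (1/2) ^ Suc (l x)"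
    unfolding point_def y by (simp add: power_add field_simps)
qed

theorem prefix_free_sf_codeword:
  assumes "prefix (sf_codeword l E x) (sf_codeword l E y)"
  shows "x = y"
proof (rule ccontr)
  assume "x \<noteq> y"
  note close = prefix_sf_codeword_point[OF assms]
  have half: "(1/2::real) ^ Suc n = (1/2) ^ n / 2" for n by simp
  consider "x < y" | "y < x" using \<open>x \<noteq> y\<close> by linarith
  then show False
  proof cases
    case 1
    then show False
      using kraft_sum_step[OF 1] close point_bounds[of x] point_bounds[of y] half[of "l x"]
      by linarith
  next
    case 2
    then show False
      using kraft_sum_step[OF 2] close point_bounds[of x] point_bounds[of y] half[of "l y"]
        zero_less_power[of "1/2::real" "l y"] by linarith
  qed
qed

lemma inj_sf_codeword: "inj (sf_codeword l E)"
  by (rule injI) (simp add: prefix_free_sf_codeword)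

end

section \<open>Positive semidefinite matrices\<close>

definition sesq :: "complex^'n^'n \<Rightarrow> complex^'n \<Rightarrow> complex^'n \<Rightarrow> complex" where
  "sesq A x y = (\<Sum>i\<in>UNIV. \<Sum>j\<in>UNIV. cnj (x $ i) * A $ i $ j * y $ j)"

lemma psd_iff_sesq: "psd A \<longleftrightarrow> hermitian A \<and> (\<forall>x. 0 \<le> Re (sesq A x x))"
  unfolding psd_def sesq_def matrix_vector_mult_def
  by (simp add: sum_distrib_left mult.assoc)

lemma psd_sesq_nonneg: "psd A \<Longrightarrow> 0 \<le> Re (sesq A x x)"
  by (simp add: psd_iff_sesq)

lemma psd_hermitian: "psd A \<Longrightarrow> hermitian A"
  by (simp add: psd_def)

lemma hermitian_entry: "hermitian A \<Longrightarrow> A $ j $ i = cnj (A $ i $ j)"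
  unfolding hermitian_def adjoint_mat_def
  by (metis (no_types, lifting) vec_lambda_beta)

lemma hermitian_cnj_entry: "hermitian A \<Longrightarrow> cnj (A $ i $ j) = A $ j $ i"
  using hermitian_entry[of A i j] by simp

lemma trace_matrix_mult: "trace (A ** B) = (\<Sum>i\<in>UNIV. \<Sum>k\<in>UNIV. A $ i $ k * B $ k $ i)"
  unfolding trace_def matrix_matrix_mult_def by simp

lemma sesq_add_left: "sesq A (x + y) z = sesq A x z + sesq A y z"
  unfolding sesq_def by (simp add: distrib_left distrib_right sum.distrib)

lemma sesq_add_right: "sesq A x (y + z) = sesq A x y + sesq A x z"
  unfolding sesq_def by (simp add: distrib_left distrib_right sum.distrib)

lemma sesq_axis_left: "sesq A (axis i u) y = cnj u * (\<Sum>j\<in>UNIV. A $ i $ j * y $ j)"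
proof -
  have "sesq A (axis i u) y = (\<Sum>i'\<in>UNIV. if i' = i then \<Sum>j\<in>UNIV. cnj u * A $ i $ j * y $ j else 0)"
    unfolding sesq_def by (rule sum.cong) (auto simp: axis_def)
  then show ?thesis by (simp add: sum_distrib_left mult.assoc)
qed

lemma sesq_axis_right: "sesq A x (axis j w) = (\<Sum>k\<in>UNIV. cnj (x $ k) * A $ k $ j) * w"
proof -
  have "(\<Sum>j'\<in>UNIV. cnj (x $ k) * A $ k $ j' * axis j w $ j') = cnj (x $ k) * A $ k $ j * w" for k
    by (simp add: axis_def if_distrib[of "\<lambda>v. _ * v"] cong: if_cong)
  then show ?thesis unfolding sesq_def by (simp add: sum_distrib_right)
qed

lemma sesq_axis_axis: "sesq A (axis i u) (axis j w) = cnj u * A $ i $ j * w"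
  unfolding sesq_axis_left by (simp add: axis_def if_distrib[of "\<lambda>v. _ * v"] cong: if_cong)

lemma sesq_axis_sum:
  "sesq A (axis i u + axis j w) (axis i u + axis j w) =
    cnj u * A $ i $ i * u + cnj u * A $ i $ j * w + cnj w * A $ j $ i * u + cnj w * A $ j $ j * w"
  by (simp add: sesq_add_left sesq_add_right sesq_axis_axis)

lemma psd_diag:
  assumes "psd A"
  shows "A $ i $ i = complex_of_real (Re (A $ i $ i))" and "0 \<le> Re (A $ i $ i)"
proof -
  have "A $ i $ i = cnj (A $ i $ i)" by (rule hermitian_entry[OF psd_hermitian[OF assms]])
  then show "A $ i $ i = complex_of_real (Re (A $ i $ i))" by (simp add: complex_eq_iff)
  show "0 \<le> Re (A $ i $ i)" using psd_sesq_nonneg[OF assms, of "axis i 1"] by (simp add: sesq_axis_axis)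
qed

lemma psd_offdiag_le:
  assumes "psd A"
  shows "cmod (A $ i $ j) \<le> (Re (A $ i $ i) + Re (A $ j $ j)) / 2"
proof (cases "A $ i $ j = 0")
  case True
  then show ?thesis using psd_diag(2)[OF assms, of i] psd_diag(2)[OF assms, of j] by simp
next
  case False
  define c where "c = A $ i $ j"
  define m where "m = cmod c"
  have m: "m > 0" using False unfolding m_def c_def by simp
  txt \<open>Test the form against \<open>e\<^sub>i + z e\<^sub>j\<close>, with the unimodular \<open>z\<close> turning \<open>c z\<close> into \<open>-|c|\<close>.\<close>
  define z where "z = - cnj c / complex_of_real m"
  have ji: "A $ j $ i = cnj c" unfolding c_def by (rule hermitian_entry[OF psd_hermitian[OF assms]])
  have cz: "c * z = - complex_of_real m"
    using m by (simp add: z_def m_def complex_norm_square[symmetric] power2_eq_square)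
  then have zc: "cnj z * cnj c = - complex_of_real m"
    by (metis complex_cnj_complex_of_real complex_cnj_minus complex_cnj_mult mult.commute)
  have zz: "cnj z * z = 1"
    using m by (simp add: z_def m_def complex_norm_square[symmetric] norm_divide power2_eq_square)
  have "sesq A (axis i 1 + axis j z) (axis i 1 + axis j z) = A $ i $ i + A $ j $ j - 2 * complex_of_real m"
  proof -
    have "sesq A (axis i 1 + axis j z) (axis i 1 + axis j z)
        = A $ i $ i + c * z + cnj z * cnj c + A $ j $ j * (cnj z * z)"
      unfolding sesq_axis_sum ji c_def by (simp add: mult.commute mult.left_commute)
    then show ?thesis unfolding cz zc zz by simp
  qed
  then show ?thesis
    using psd_sesq_nonneg[OF assms, of "axis i 1 + axis j z"] by (simp add: m_def c_def)
qed

lemma psd_zero_diag: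
  assumes "psd A" and "A $ i $ i = 0"
  shows "A $ i $ l = 0"
proof (rule ccontr)
  assume nz: "A $ i $ l \<noteq> 0"
  define c where "c = A $ i $ l"
  define n2 where "n2 = (cmod c)\<^sup>2"
  have n2: "n2 > 0" using nz unfolding n2_def c_def by simp
  have li: "A $ l $ i = cnj c" unfolding c_def by (rule hermitian_entry[OF psd_hermitian[OF assms(1)]])
  txt \<open>Along \<open>u e\<^sub>i + e\<^sub>l\<close> the form is affine in \<open>u\<close>, so a suitable \<open>u\<close> makes it negative.\<close>
  define t where "t = (Re (A $ l $ l) + 1) / (2 * n2)"
  define u where "u = - complex_of_real t * c"
  have cc: "c * cnj c = complex_of_real n2" unfolding n2_def by (rule complex_norm_square[symmetric])
  have "sesq A (axis i u + axis l 1) (axis i u + axis l 1) = cnj u * c + cnj c * u + A $ l $ l"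
    unfolding sesq_axis_sum li c_def using assms(2) by simp
  also have "\<dots> = A $ l $ l - complex_of_real (2 * t * n2)"
    unfolding u_def using cc by (simp add: algebra_simps)
  finally have "Re (sesq A (axis i u + axis l 1) (axis i u + axis l 1)) = Re (A $ l $ l) - 2 * t * n2"
    by simp
  also have "\<dots> = -1" unfolding t_def using n2 by (simp add: field_simps)
  finally show False using psd_sesq_nonneg[OF assms(1), of "axis i u + axis l 1"] by simp
qed

lemma density_psd: "density_matrix \<rho> \<Longrightarrow> psd \<rho>"
  unfolding density_matrix_def loewner_le_def by simp

lemma density_diag_le_1:
  assumes "density_matrix \<rho>"
  shows "Re (\<rho> $ i $ i) \<le> 1"
proof -
  have "Re (\<rho> $ i $ i) \<le> (\<Sum>k\<in>UNIV. Re (\<rho> $ k $ k))"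
    by (rule member_le_sum) (auto intro: psd_diag(2)[OF density_psd[OF assms]])
  also have "\<dots> = Re (trace \<rho>)" by (simp add: trace_def)
  also have "\<dots> = 1" using assms by (simp add: density_matrix_def)
  finally show ?thesis .
qed

lemma density_trace_mult_le:
  fixes \<rho> R :: "complex^'n^'n"
  assumes "density_matrix \<rho>" and "psd R"
  shows "Re (trace (\<rho> ** R)) \<le> real CARD('n) * Re (trace R)"
proof -
  have entry: "cmod (\<rho> $ i $ k) \<le> 1" for i k
    using psd_offdiag_le[OF density_psd[OF assms(1)], of i k]
      density_diag_le_1[OF assms(1), of i] density_diag_le_1[OF assms(1), of k] by simp
  have "Re (trace (\<rho> ** R)) = (\<Sum>i\<in>UNIV. \<Sum>k\<in>UNIV. Re (\<rho> $ i $ k * R $ k $ i))"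
    unfolding trace_matrix_mult by simp
  also have "\<dots> \<le> (\<Sum>i\<in>UNIV. \<Sum>k\<in>UNIV. (Re (R $ k $ k) + Re (R $ i $ i)) / 2)"
  proof (intro sum_mono)
    fix i k
    have "Re (\<rho> $ i $ k * R $ k $ i) \<le> cmod (\<rho> $ i $ k) * cmod (R $ k $ i)"
      using complex_Re_le_cmod[of "\<rho> $ i $ k * R $ k $ i"] by (simp add: norm_mult)
    also have "\<dots> \<le> cmod (R $ k $ i)" using mult_right_mono[OF entry norm_ge_zero] by simp
    also have "\<dots> \<le> (Re (R $ k $ k) + Re (R $ i $ i)) / 2" by (rule psd_offdiag_le[OF assms(2)])
    finally show "Re (\<rho> $ i $ k * R $ k $ i) \<le> (Re (R $ k $ k) + Re (R $ i $ i)) / 2" .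
  qed
  also have "\<dots> = real CARD('n) * Re (trace R)"
    by (simp add: trace_def sum.distrib sum_divide_distrib[symmetric]
        sum_distrib_left[symmetric] algebra_simps)
  finally show ?thesis .
qed

definition supported_on :: "complex^'n^'n \<Rightarrow> 'n set \<Rightarrow> bool" where
  "supported_on A S \<longleftrightarrow> (\<forall>k l. A $ k $ l \<noteq> 0 \<longrightarrow> k \<in> S \<and> l \<in> S)"

definition schur_complement :: "complex^'n^'n \<Rightarrow> 'n \<Rightarrow> complex^'n^'n" where
  "schur_complement A i = (\<chi> k l. A $ k $ l - A $ k $ i * A $ i $ l / A $ i $ i)"

lemma schur_complement_nth:
  "schur_complement A i $ k $ l = A $ k $ l - A $ k $ i * A $ i $ l / A $ i $ i"
  by (simp add: schur_complement_def)

lemma supported_on_schur_complement: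
  assumes "supported_on A (insert i S)" and "A $ i $ i \<noteq> 0"
  shows "supported_on (schur_complement A i) S"
  unfolding supported_on_def
proof (intro allI impI)
  fix k l assume nz: "schur_complement A i $ k $ l \<noteq> 0"
  have "schur_complement A i $ i $ l = 0" "schur_complement A i $ k $ i = 0"
    using assms(2) by (simp_all add: schur_complement_nth)
  with nz have "k \<noteq> i" "l \<noteq> i" by auto
  moreover have "A $ k $ l \<noteq> 0 \<or> A $ k $ i \<noteq> 0 \<and> A $ i $ l \<noteq> 0"
    using nz unfolding schur_complement_nth by fastforce
  ultimately show "k \<in> S \<and> l \<in> S" using assms(1) unfolding supported_on_def by blast
qed

lemma sesq_schur_complement:
  assumes "hermitian A" and "A $ i $ i \<noteq> 0"
  shows "sesq (schur_complement A i) x x =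
    sesq A x x - cnj (\<Sum>l\<in>UNIV. A $ i $ l * x $ l) * (\<Sum>l\<in>UNIV. A $ i $ l * x $ l) / A $ i $ i"
proof -
  have col: "(\<Sum>k\<in>UNIV. cnj (x $ k) * A $ k $ i) = cnj (\<Sum>l\<in>UNIV. A $ i $ l * x $ l)"
    by (simp add: hermitian_cnj_entry[OF assms(1)] mult.commute)
  have "sesq (schur_complement A i) x x = sesq A x x
      - (\<Sum>k\<in>UNIV. \<Sum>l\<in>UNIV. cnj (x $ k) * A $ k $ i * (A $ i $ l * x $ l)) / A $ i $ i"
    unfolding sesq_def schur_complement_nth
    by (simp add: algebra_simps sum_subtractf sum_divide_distrib)
  also have "(\<Sum>k\<in>UNIV. \<Sum>l\<in>UNIV. cnj (x $ k) * A $ k $ i * (A $ i $ l * x $ l))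
      = (\<Sum>k\<in>UNIV. cnj (x $ k) * A $ k $ i) * (\<Sum>l\<in>UNIV. A $ i $ l * x $ l)"
    by (simp add: sum_product)
  finally show ?thesis unfolding col .
qed

lemma psd_schur_complement:
  fixes A :: "complex^'n^'n"
  assumes "psd A" and "A $ i $ i \<noteq> 0"
  shows "psd (schur_complement A i)"
  unfolding psd_iff_sesq
proof (intro conjI allI)
  have h: "hermitian A" by (rule psd_hermitian[OF assms(1)])
  show "hermitian (schur_complement A i)"
    unfolding hermitian_def adjoint_mat_def
    by (simp add: vec_eq_iff schur_complement_nth hermitian_cnj_entry[OF h])
  fix x :: "complex^'n"
  define a where "a = Re (A $ i $ i)"
  have a: "A $ i $ i = complex_of_real a" "a > 0"
    using psd_diag[OF assms(1), of i] assms(2) unfolding a_def by (auto simp: complex_eq_iff)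
  define w where "w = (\<Sum>l\<in>UNIV. A $ i $ l * x $ l)"
  txt \<open>The form of the Schur complement at \<open>x\<close> is the form of \<open>A\<close> at a shifted vector.\<close>
  define t where "t = - w / complex_of_real a"
  have "sesq A (x + axis i t) (x + axis i t)
      = sesq A x x + sesq A x (axis i t) + sesq A (axis i t) x + sesq A (axis i t) (axis i t)"
    by (simp only: sesq_add_left sesq_add_right add_ac)
  also have "\<dots> = sesq A x x + cnj w * t + cnj t * w + cnj t * A $ i $ i * t"
  proof -
    have "sesq A x (axis i t) = cnj w * t"
      unfolding sesq_axis_right w_def by (simp add: hermitian_cnj_entry[OF h] mult.commute)
    moreover have "sesq A (axis i t) x = cnj t * w"
      unfolding sesq_axis_left w_def ..
    ultimately show ?thesis by (simp add: sesq_axis_axis)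
  qed
  also have "\<dots> = sesq (schur_complement A i) x x"
    unfolding sesq_schur_complement[OF h assms(2)] w_def[symmetric] t_def a using a(2)
    by (simp add: field_simps)
  finally show "0 \<le> Re (sesq (schur_complement A i) x x)"
    using psd_sesq_nonneg[OF assms(1)] by metis
qed

lemma trace_mult_schur_complement:
  assumes "hermitian A" and "A $ i $ i \<noteq> 0"
  shows "trace (A ** B) = trace (schur_complement A i ** B) + sesq B (column i A) (column i A) / A $ i $ i"
proof -
  have "trace (A ** B) = trace (schur_complement A i ** B)
      + (\<Sum>k\<in>UNIV. \<Sum>l\<in>UNIV. A $ k $ i * A $ i $ l * B $ l $ k) / A $ i $ i"
    unfolding trace_matrix_mult schur_complement_nth
    by (simp add: algebra_simps sum.distrib sum_subtractf sum_divide_distrib)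
  also have "(\<Sum>k\<in>UNIV. \<Sum>l\<in>UNIV. A $ k $ i * A $ i $ l * B $ l $ k)
      = (\<Sum>l\<in>UNIV. \<Sum>k\<in>UNIV. A $ i $ l * B $ l $ k * A $ k $ i)"
    by (subst sum.swap) (simp add: mult.commute mult.left_commute)
  also have "\<dots> = sesq B (column i A) (column i A)"
    unfolding sesq_def column_def by (simp add: hermitian_cnj_entry[OF assms(1)])
  finally show ?thesis .
qed

text \<open>Repeated Schur complement steps decompose \<open>A\<close> into rank-one terms \<open>c c\<^sup>* / a\<close>, each of
  which contributes \<open>c\<^sup>* B c / a \<ge> 0\<close> to the trace.\<close>

lemma psd_trace_mult_nonneg:
  fixes A B :: "complex^'n^'n"
  assumes "psd A" and "psd B"
  shows "0 \<le> Re (trace (A ** B))"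
proof -
  have "0 \<le> Re (trace (A ** B))" if "finite S" "psd A" "supported_on A S" for S and A :: "complex^'n^'n"
    using that
  proof (induction S arbitrary: A rule: finite_induct)
    case empty
    then show ?case by (simp add: supported_on_def trace_matrix_mult)
  next
    case (insert i S)
    have h: "hermitian A" by (rule psd_hermitian[OF insert.prems(1)])
    show ?case
    proof (cases "A $ i $ i = 0")
      case True
      then have "A $ i $ l = 0" and "A $ l $ i = 0" for l
        using psd_zero_diag[OF insert.prems(1) True] hermitian_entry[OF h, of i l] by auto
      then have "supported_on A S" using insert.prems(2) unfolding supported_on_def by blast
      then show ?thesis using insert.IH insert.prems(1) by blast
    next
      case False
      have "0 \<le> Re (trace (schur_complement A i ** B))"
        using insert.IH psd_schur_complement[OF insert.prems(1) False]
          supported_on_schur_complement[OF insert.prems(2) False] by blast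
      moreover have "0 \<le> Re (sesq B (column i A) (column i A) / A $ i $ i)"
        using psd_diag[OF insert.prems(1), of i] psd_sesq_nonneg[OF assms(2), of "column i A"]
        by (metis Re_divide_of_real divide_nonneg_nonneg)
      ultimately show ?thesis unfolding trace_mult_schur_complement[OF h False] by simp
    qed
  qed
  from this[of UNIV A] show ?thesis using assms(1) by (simp add: supported_on_def)
qed

lemma entry_le_opnorm: "cmod (M $ i $ j) \<le> opnorm M"
proof -
  have "M $ i $ j = (M *v axis j 1) $ i"
    by (simp add: matrix_vector_mult_def axis_def if_distrib[of "\<lambda>v. _ * v"] cong: if_cong)
  also have "cmod \<dots> \<le> norm (M *v axis j 1)" by (rule Finite_Cartesian_Product.norm_nth_le)
  also have "\<dots> \<le> onorm (\<lambda>x. M *v x) * norm (axis j (1::complex))"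
    by (rule onorm) simp
  finally show ?thesis by (simp add: opnorm_def Basis_complex_def)
qed

lemma povm_psd: "povm R \<Longrightarrow> psd (R s)"
  unfolding povm_def loewner_le_def by simp

lemma povm_trace_has_sum:
  fixes R :: "bool list \<Rightarrow> complex^'n^'n"
  assumes "povm R"
  shows "((\<lambda>s. Re (trace (R s))) has_sum real CARD('n)) UNIV"
proof -
  have "bounded_linear (\<lambda>M::complex^'n^'n. Re (trace M))"
    unfolding trace_def
    by (intro bounded_linear_compose[OF bounded_linear_Re] bounded_linear_sum
        bounded_linear_compose[OF bounded_linear_vec_nth bounded_linear_vec_nth])
  moreover have "(R has_sum mat 1) UNIV" using assms unfolding povm_def by simp
  ultimately show ?thesis using has_sum_bounded_linear by (fastforce simp: trace_I)
qed

lemma povm_sum_trace_le: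
  fixes R :: "bool list \<Rightarrow> complex^'n^'n"
  assumes "povm R" and "finite F"
  shows "(\<Sum>s\<in>F. Re (trace (R s))) \<le> real CARD('n)"
  by (rule finite_sum_le_has_sum[OF povm_trace_has_sum[OF assms(1)] assms(2)])
    (simp_all add: trace_def psd_diag(2)[OF povm_psd[OF assms(1)]] sum_nonneg)

section \<open>Code lengths computed from the approximations\<close>

lemma Re_decode_cq:
  "Re (decode_cq n) =
    real_of_int (int_decode (fst (prod_decode n))) / real (Suc (snd (prod_decode (snd (prod_decode n)))))"
  by (simp add: decode_cq_def split: prod.split)

lemma max_int_decode_0: "max (real_of_int (int_decode a)) 0 = real (if even a then a div 2 else 0)"
  by (auto simp: int_decode_def sum_decode_def)

locale povm_approximation =
  fixes R :: "bool list \<Rightarrow> complex^'n^'n" and g :: "'n \<Rightarrow> 'n \<Rightarrow> nat list \<Rightarrow> nat"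
    and margin :: nat
  assumes povm: "povm R"
    and g_recursive: "\<And>i j. total_recursive 2 (g i j)"
    and approximates: "\<And>s k. opnorm (R s - (\<chi> i j. decode_cq (g i j [str_code s, k]))) < (1/2) ^ k"
    and margin: "16 * real CARD('n) \<le> 2 ^ margin"
begin

text \<open>Strings are indexed by their codes \<open>x\<close>; the \<open>x\<close>-th string is approximated to precision
  \<open>2 ^ -(x + 1)\<close>, so that the approximation errors are summable over all strings.
  \<open>trace_upper x / 2 ^ (x + 1)\<close> is an upper bound for the trace, and \<open>code_length x\<close> is,
  up to the cap \<open>x + 1 + margin\<close>, the largest \<open>\<ell>\<close> with
  \<open>2 ^ \<ell> * trace_upper x / 2 ^ (x + 1) \<le> 2 ^ margin\<close>.\<close>

definition diag_upper :: "'n \<Rightarrow> nat \<Rightarrow> nat" where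
  "diag_upper i x = nat \<lceil>max (Re (decode_cq (g i i [x, Suc x]))) 0 * 2 ^ Suc x\<rceil>"

definition trace_upper :: "nat \<Rightarrow> nat" where
  "trace_upper x = (\<Sum>i\<in>UNIV. Suc (diag_upper i x))"

definition code_length :: "nat \<Rightarrow> nat" where
  "code_length x = (\<Sum>j<x + 1 + margin. of_bool (2 ^ Suc j * trace_upper x \<le> 2 ^ (margin + Suc x)))"

definition precision :: "nat \<Rightarrow> nat" where
  "precision x = x + 2 + margin"

definition codeword :: "nat \<Rightarrow> bool list" where
  "codeword = sf_codeword code_length precision"

lemma total_recursive_diag_upper:
  assumes "total_recursive k h"
  shows "total_recursive k (\<lambda>xs. diag_upper i (h xs))"
proof -
  have n: "total_recursive k (\<lambda>xs. g i i [h xs, Suc (h xs)])"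
    by (rule total_recursive_comp2[OF g_recursive assms total_recursive_Suc[OF assms]])
  note pd = total_recursive_prod_decode[OF n] total_recursive_prod_decode(2)[OF total_recursive_prod_decode(2)[OF n]]
  have eq: "diag_upper i x =
      ((if even (fst (prod_decode m)) then fst (prod_decode m) div 2 else 0) * 2 ^ Suc x
        + Suc (snd (prod_decode (snd (prod_decode m)))) - 1) div Suc (snd (prod_decode (snd (prod_decode m))))"
    if m: "m = g i i [x, Suc x]" for x m
  proof -
    define q where "q = Suc (snd (prod_decode (snd (prod_decode m))))"
    define p where "p = (if even (fst (prod_decode m)) then fst (prod_decode m) div 2 else 0)"
    have "max (z / real q) 0 = max z 0 / real q" for z
      by (cases "z \<le> 0") (auto simp: q_def max_def divide_le_0_iff)
    then have "max (Re (decode_cq m)) 0 = real p / real q"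
      unfolding Re_decode_cq q_def[symmetric] by (simp add: max_int_decode_0 p_def)
    then have "diag_upper i x = nat \<lceil>real (p * 2 ^ Suc x) / real q\<rceil>"
      unfolding diag_upper_def m[symmetric] by simp
    also have "\<dots> = (p * 2 ^ Suc x + q - 1) div q"
      by (subst ceiling_divide_nat) (simp_all add: q_def)
    finally show ?thesis unfolding p_def q_def .
  qed
  show ?thesis
    unfolding eq[OF refl]
    by (intro total_recursive_div total_recursive_diff total_recursive_add total_recursive_mult
        total_recursive_If recursive_pred_even total_recursive_power total_recursive_Suc
        total_recursive_const pd assms)
qed

lemma total_recursive_trace_upper:
  "total_recursive k h \<Longrightarrow> total_recursive k (\<lambda>xs. trace_upper (h xs))"
  unfolding trace_upper_def
  by (intro total_recursive_sum total_recursive_Suc total_recursive_diag_upper) simp_all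

lemma total_recursive_code_length:
  assumes "total_recursive k h"
  shows "total_recursive k (\<lambda>xs. code_length (h xs))"
proof -
  have "recursive_pred (Suc k)
      (\<lambda>ys. 2 ^ Suc (ys ! 0) * trace_upper (h (tl ys)) \<le> 2 ^ (margin + Suc (h (tl ys))))"
    using total_recursive_tl[OF assms]
    by (intro recursive_pred_le total_recursive_mult total_recursive_power total_recursive_add
        total_recursive_Suc total_recursive_const total_recursive_proj total_recursive_trace_upper) simp_all
  moreover have "total_recursive k (\<lambda>xs. h xs + 1 + margin)"
    using assms by (intro total_recursive_add total_recursive_const)
  ultimately show ?thesis
    unfolding code_length_def recursive_pred_def
    by (rule total_recursive_sum_lessThan[THEN total_recursive_cong]) simp
qed

lemma total_recursive_codeword:
  "total_recursive 1 (\<lambda>xs. str_code (codeword (xs ! 0)))"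
proof -
  have x: "total_recursive 1 (\<lambda>xs. xs ! 0)" by (rule total_recursive_proj) simp
  have "total_recursive (Suc 1) (\<lambda>ys. 2 ^ (precision (ys ! 1) - code_length (ys ! 0)))"
    unfolding precision_def
    by (intro total_recursive_power total_recursive_diff total_recursive_add total_recursive_const
        total_recursive_code_length total_recursive_proj) simp_all
  from total_recursive_sum_lessThan[OF this x]
  have "total_recursive 1 (\<lambda>xs. sf_numerator code_length precision (xs ! 0))"
    unfolding sf_numerator_def by (simp only: nth_Cons_0 nth_Cons_Suc One_nat_def)
  then have "total_recursive 1 (\<lambda>xs. sf_point code_length precision (xs ! 0))"
    unfolding sf_point_def precision_def
    by (intro total_recursive_div total_recursive_diff total_recursive_add total_recursive_power
        total_recursive_const total_recursive_code_length total_recursive_Suc x) simp_all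
  then show ?thesis
    unfolding codeword_def sf_codeword_def
    by (intro total_recursive_str_code_low_bits total_recursive_Suc total_recursive_code_length x)
qed

lemmas psd_R = povm_psd[OF povm]

lemma diag_upper_bounds:
  fixes i :: 'n and x :: nat
  defines "eps \<equiv> (1/2::real) ^ Suc x"
  shows "Re (R (str_decode x) $ i $ i) \<le> (real (diag_upper i x) + 1) * eps"
    and "(real (diag_upper i x) + 1) * eps \<le> Re (R (str_decode x) $ i $ i) + 3 * eps"
proof -
  define G where "G = Re (decode_cq (g i i [x, Suc x]))"
  define r where "r = Re (R (str_decode x) $ i $ i)"
  have "cmod ((R (str_decode x) - (\<chi> i j. decode_cq (g i j [str_code (str_decode x), Suc x]))) $ i $ i) < eps"
    using entry_le_opnorm approximates[of "str_decode x" "Suc x"] unfolding eps_def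
    by (rule le_less_trans)
  then have close: "\<bar>r - G\<bar> < eps"
    using abs_Re_le_cmod[of "R (str_decode x) $ i $ i - decode_cq (g i i [x, Suc x])"]
    unfolding r_def G_def by simp
  have r: "0 \<le> r" unfolding r_def by (rule psd_diag(2)[OF psd_R])
  have eps: "eps = 1 / 2 ^ Suc x" unfolding eps_def by (simp add: power_one_over)
  define M where "M = max G 0"
  have "real (diag_upper i x) = of_int \<lceil>M * 2 ^ Suc x\<rceil>"
    unfolding diag_upper_def G_def M_def by simp
  then have "M * 2 ^ Suc x \<le> real (diag_upper i x)" and "real (diag_upper i x) < M * 2 ^ Suc x + 1"
    using ceiling_correct[of "M * 2 ^ Suc x"] by linarith+
  then have "M \<le> real (diag_upper i x) * eps" and "real (diag_upper i x) * eps < M + eps"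
    unfolding eps by (simp_all add: field_simps)
  moreover have "G \<le> M" "0 \<le> M" "M < r + eps" using close r by (auto simp: M_def)
  ultimately show "Re (R (str_decode x) $ i $ i) \<le> (real (diag_upper i x) + 1) * eps"
    and "(real (diag_upper i x) + 1) * eps \<le> Re (R (str_decode x) $ i $ i) + 3 * eps"
    using close unfolding r_def[symmetric] distrib_right abs_less_iff by linarith+
qed

lemma trace_upper_bounds:
  fixes x :: nat
  defines "eps \<equiv> (1/2::real) ^ Suc x"
  shows "Re (trace (R (str_decode x))) \<le> real (trace_upper x) * eps"
    and "real (trace_upper x) * eps \<le> Re (trace (R (str_decode x))) + 3 * real CARD('n) * eps"
proof -
  have W: "real (trace_upper x) * eps = (\<Sum>i\<in>UNIV. (real (diag_upper i x) + 1) * eps)"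
    unfolding trace_upper_def by (simp add: sum_distrib_right add.commute)
  show "Re (trace (R (str_decode x))) \<le> real (trace_upper x) * eps"
    unfolding W trace_def Re_sum unfolding eps_def by (intro sum_mono diag_upper_bounds(1))
  have "real (trace_upper x) * eps \<le> (\<Sum>i\<in>UNIV. Re (R (str_decode x) $ i $ i) + 3 * eps)"
    unfolding W unfolding eps_def by (intro sum_mono diag_upper_bounds(2))
  then show "real (trace_upper x) * eps \<le> Re (trace (R (str_decode x))) + 3 * real CARD('n) * eps"
    by (simp add: trace_def sum.distrib)
qed

lemma trace_upper_le: "real (trace_upper x) * (1/2) ^ Suc x \<le> 4 * real CARD('n)"
proof -
  have "(1/2::real) ^ Suc x \<le> 1" by (rule power_le_one) simp_all
  then have "3 * real CARD('n) * (1/2) ^ Suc x \<le> 3 * real CARD('n)"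
    using mult_left_mono[of _ 1 "3 * real CARD('n)"] by simp
  moreover have "Re (trace (R (str_decode x))) \<le> real CARD('n)"
    using povm_sum_trace_le[OF povm, of "{str_decode x}"] by simp
  ultimately show ?thesis using trace_upper_bounds(2)[of x] by linarith
qed

definition fits :: "nat \<Rightarrow> nat \<Rightarrow> bool" where
  "fits x j \<longleftrightarrow> 2 ^ Suc j * trace_upper x \<le> 2 ^ (margin + Suc x)"

lemma fits_downward_closed: "i \<le> j \<Longrightarrow> fits x j \<Longrightarrow> fits x i"
  unfolding fits_def by (meson le_trans mult_le_mono1 one_le_numeral power_increasing Suc_le_mono)

lemma code_length_fits:
  shows "code_length x \<le> x + 1 + margin"
    and "j < code_length x \<Longrightarrow> fits x j"
    and "code_length x < x + 1 + margin \<Longrightarrow> \<not> fits x (code_length x)"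
proof -
  have c: "code_length x = (\<Sum>j<x + 1 + margin. of_bool (fits x j))"
    unfolding code_length_def fits_def ..
  note dc = fits_downward_closed[of _ _ x]
  show "code_length x \<le> x + 1 + margin"
    unfolding c by (rule count_downward_closed(1)) (rule dc)
  show "j < code_length x \<Longrightarrow> fits x j"
    unfolding c by (rule count_downward_closed(2)) (rule dc)
  show "code_length x < x + 1 + margin \<Longrightarrow> \<not> fits x (code_length x)"
    unfolding c by (rule count_downward_closed(3)) (rule dc)
qed

lemma trace_le_code_length: "Re (trace (R (str_decode x))) \<le> 2 ^ margin * (1/2) ^ code_length x"
proof -
  have "real (trace_upper x) * (1/2) ^ Suc x \<le> 2 ^ margin * (1/2) ^ code_length x"
  proof (cases "code_length x")
    case 0
    then show ?thesis using trace_upper_le[of x] margin by simp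
  next
    case (Suc l)
    then have "fits x l" using code_length_fits(2)[of l x] by simp
    then have "real (2 ^ Suc l * trace_upper x) \<le> real (2 ^ (margin + Suc x))"
      unfolding fits_def by (simp only: of_nat_le_iff)
    then show ?thesis using Suc by (simp add: power_add field_simps)
  qed
  then show ?thesis using trace_upper_bounds(1)[of x] by linarith
qed

lemma code_length_bound:
  "(1/2::real) ^ code_length x \<le> 2 / 2 ^ margin * (trace_upper x * (1/2) ^ Suc x) + (1/2) ^ margin * (1/2) ^ Suc x"
proof (cases "code_length x < x + 1 + margin")
  case True
  then have "\<not> fits x (code_length x)" by (rule code_length_fits(3))
  then have "real (2 ^ (margin + Suc x)) < real (2 ^ Suc (code_length x) * trace_upper x)"
    unfolding fits_def by (simp only: of_nat_less_iff not_le)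
  then have "(1/2::real) ^ code_length x < 2 / 2 ^ margin * (trace_upper x * (1/2) ^ Suc x)"
    by (simp add: power_add field_simps)
  moreover have "0 \<le> (1/2::real) ^ margin * (1/2) ^ Suc x" by simp
  ultimately show ?thesis by linarith
next
  case False
  then have "code_length x = margin + Suc x" using code_length_fits(1)[of x] by simp
  then show ?thesis by (simp add: power_add)
qed

lemma kraft_code_length: "(\<Sum>t\<le>x. (1/2::real) ^ code_length t) \<le> 1"
proof -
  have geometric: "(\<Sum>t\<le>x. (1/2::real) ^ Suc t) \<le> 1"
  proof -
    have "(\<Sum>t\<le>x. (1/2::real) ^ Suc t) = 1 - (1/2) ^ Suc x" by (induction x) simp_all
    then show ?thesis by simp
  qed
  have traces: "(\<Sum>t\<le>x. Re (trace (R (str_decode t)))) \<le> real CARD('n)"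
  proof -
    have "inj_on str_decode {..x}" using inj_str_decode by (rule inj_on_subset) simp
    then have "(\<Sum>t\<le>x. Re (trace (R (str_decode t)))) = (\<Sum>s\<in>str_decode ` {..x}. Re (trace (R s)))"
      by (simp add: sum.reindex)
    also have "\<dots> \<le> real CARD('n)" by (rule povm_sum_trace_le[OF povm]) simp
    finally show ?thesis .
  qed
  have "(\<Sum>t\<le>x. real (trace_upper t) * (1/2) ^ Suc t)
      \<le> (\<Sum>t\<le>x. Re (trace (R (str_decode t))) + 3 * real CARD('n) * (1/2) ^ Suc t)"
    by (intro sum_mono trace_upper_bounds(2))
  also have "\<dots> = (\<Sum>t\<le>x. Re (trace (R (str_decode t)))) + 3 * real CARD('n) * (\<Sum>t\<le>x. (1/2) ^ Suc t)"
    by (simp only: sum.distrib sum_distrib_left)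
  also have "\<dots> \<le> real CARD('n) + 3 * real CARD('n) * 1"
    by (intro add_mono mult_left_mono traces geometric) simp
  finally have uppers: "(\<Sum>t\<le>x. real (trace_upper t) * (1/2) ^ Suc t) \<le> 4 * real CARD('n)"
    by simp
  have "(\<Sum>t\<le>x. (1/2::real) ^ code_length t)
      \<le> 2 / 2 ^ margin * (\<Sum>t\<le>x. real (trace_upper t) * (1/2) ^ Suc t) + (1/2) ^ margin * (\<Sum>t\<le>x. (1/2) ^ Suc t)"
    unfolding sum_distrib_left sum.distrib[symmetric] by (intro sum_mono code_length_bound)
  also have "\<dots> \<le> 2 / 2 ^ margin * (4 * real CARD('n)) + (1/2) ^ margin * 1"
    by (intro add_mono mult_left_mono uppers geometric) simp_all
  also have "\<dots> \<le> 1"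
  proof -
    have "1 \<le> real CARD('n)" by simp
    then have "1 + 8 * real CARD('n) \<le> 2 ^ margin" using margin by linarith
    then show ?thesis by (simp add: field_simps)
  qed
  finally show ?thesis .
qed

sublocale shannon_fano code_length precision
proof
  show "code_length t \<le> precision x" if "t < x" for t x
    using code_length_fits(1)[of t] that by (simp add: precision_def)
  show "Suc (code_length x) \<le> precision x" for x
    using code_length_fits(1)[of x] by (simp add: precision_def)
qed (rule kraft_code_length)

definition decoder :: "bool list \<Rightarrow> bool list option" where
  "decoder p = (if p \<in> range codeword then Some (str_decode (inv codeword p)) else None)"

lemma inj_codeword: "inj codeword"
  unfolding codeword_def by (rule inj_sf_codeword)

lemma decoder_codeword: "decoder (codeword (str_code s)) = Some s"
  by (simp add: decoder_def inv_f_f[OF inj_codeword])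

lemma computer_decoder: "computer decoder"
  unfolding computer_def
proof (intro conjI allI impI exI)
  let ?c = "\<lambda>x. str_code (codeword x)"
  have "inj ?c" using inj_str_code inj_codeword by (simp add: inj_def)
  show "partial_recursive1 (\<lambda>n. if n \<in> range ?c then Some (inv ?c n) else None)"
    by (rule partial_recursive1_inv[OF total_recursive_codeword \<open>inj ?c\<close>])
  show "(if str_code p \<in> range ?c then Some (inv ?c (str_code p)) else None)
      = map_option str_code (decoder p)" for p
  proof (cases "p \<in> range codeword")
    case True
    then obtain x where "p = codeword x" by blast
    then show ?thesis by (simp add: decoder_def inv_f_f[OF \<open>inj ?c\<close>] inv_f_f[OF inj_codeword])
  next
    case False
    then show ?thesis using inj_str_code by (auto simp: decoder_def inj_eq)
  qed
  show "p = q" if "decoder p \<noteq> None" "decoder q \<noteq> None" "prefix p q" for p q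
    using that prefix_free_sf_codeword unfolding decoder_def codeword_def
    by (auto split: if_splits)
qed

lemma short_programs:
  assumes "optimal_computer U"
  obtains sim where "\<And>s. \<exists>p. U p = Some s \<and> length p \<le> Suc (code_length (str_code s)) + sim"
proof -
  obtain sim where "\<And>p s. decoder p = Some s \<Longrightarrow> \<exists>p'. U p' = Some s \<and> length p' \<le> length p + sim"
    using assms computer_decoder unfolding optimal_computer_def by blast
  from this[OF decoder_codeword] show ?thesis
    by (intro that) (simp add: codeword_def)
qed

lemma program_bound:
  assumes "optimal_computer U"
  shows "\<exists>c>0. \<forall>s. \<exists>p. U p = Some s \<and> Re (trace (R s)) \<le> c * (1/2) ^ length p"
proof -
  obtain sim where sim: "\<And>s. \<exists>p. U p = Some s \<and> length p \<le> Suc (code_length (str_code s)) + sim"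
    using short_programs[OF assms] by blast
  have "\<exists>p. U p = Some s \<and> Re (trace (R s)) \<le> 2 ^ margin * 2 ^ Suc sim * (1/2) ^ length p" for s
  proof -
    obtain p where p: "U p = Some s" "length p \<le> Suc (code_length (str_code s)) + sim"
      using sim by blast
    have "Re (trace (R s)) \<le> 2 ^ margin * (1/2) ^ code_length (str_code s)"
      using trace_le_code_length[of "str_code s"] by simp
    also have "(1/2::real) ^ code_length (str_code s)
        = 2 ^ Suc sim * (1/2) ^ (Suc (code_length (str_code s)) + sim)"
      by (simp add: power_add power_one_over)
    also have "\<dots> \<le> 2 ^ Suc sim * (1/2) ^ length p"
      using p(2) by (intro mult_left_mono power_decreasing) simp_all
    finally show ?thesis using p(1) by (auto simp: mult.assoc)
  qed
  then show ?thesis by (intro exI[of _ "2 ^ margin * 2 ^ Suc sim"]) simp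
qed

end

lemma computable_povm_measurement_bound:
  fixes R :: "bool list \<Rightarrow> complex^'n^'n"
  assumes "optimal_computer U" and "computable_mat_fun R" and "povm R"
  obtains C where "C > 0" and "\<And>\<rho> s. density_matrix (\<rho>::complex^'n^'n) \<Longrightarrow> \<exists>p. U p = Some s \<and>
    0 \<le> Re (trace (\<rho> ** R s)) \<and> Re (trace (\<rho> ** R s)) \<le> C * (1/2) ^ length p"
proof -
  obtain g where "\<And>i j. total_recursive 2 (g i j)"
    and "\<And>s k. opnorm (R s - (\<chi> i j. decode_cq (g i j [str_code s, k]))) < (1/2) ^ k"
    using assms(2) unfolding computable_mat_fun_def by blast
  moreover have "16 * real CARD('n) \<le> 2 ^ (CARD('n) + 4)"
    using less_exp[of "CARD('n)"] by (simp add: less_imp_le power_add)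
  ultimately interpret povm_approximation R g "CARD('n) + 4"
    using assms(3) by unfold_locales
  obtain c where "c > 0" and c: "\<And>s. \<exists>p. U p = Some s \<and> Re (trace (R s)) \<le> c * (1/2) ^ length p"
    using program_bound[OF assms(1)] by blast
  show ?thesis
  proof (rule that[of "real CARD('n) * c"])
    show "0 < real CARD('n) * c" using \<open>c > 0\<close> by simp
    fix \<rho> :: "complex^'n^'n" and s assume \<rho>: "density_matrix \<rho>"
    obtain p where p: "U p = Some s" "Re (trace (R s)) \<le> c * (1/2) ^ length p" using c by blast
    have "Re (trace (\<rho> ** R s)) \<le> real CARD('n) * Re (trace (R s))"
      by (rule density_trace_mult_le[OF \<rho> psd_R])
    also have "\<dots> \<le> real CARD('n) * c * (1/2) ^ length p"
      unfolding mult.assoc by (rule mult_left_mono[OF p(2)]) simp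
    finally show "\<exists>p. U p = Some s \<and> 0 \<le> Re (trace (\<rho> ** R s)) \<and>
        Re (trace (\<rho> ** R s)) \<le> real CARD('n) * c * (1/2) ^ length p"
      using p(1) psd_trace_mult_nonneg[OF density_psd[OF \<rho>] psd_R] by blast
  qed
qed

theorem mainTheorem1:
  fixes U :: "bool list \<Rightarrow> bool list option"
    and R :: "bool list \<Rightarrow> complex^'n^'n"
  assumes "optimal_computer U"
    and "computable_mat_fun R"
    and "povm R"
  shows "(\<exists>d::nat. \<forall>\<rho> s. density_matrix \<rho> \<longrightarrow>
            ereal (real (Kc U s)) - ereal (real d) \<le> neg_log2 (Re (trace (\<rho> ** R s)))) \<and>
         (\<exists>c::real. c > 0 \<and> (\<forall>\<rho> s. density_matrix \<rho> \<longrightarrow>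
            Re (trace (\<rho> ** R s)) \<le> c * Pc U s))"
proof -
  obtain C where "C > 0" and bound: "\<And>\<rho> s. density_matrix (\<rho>::complex^'n^'n) \<Longrightarrow> \<exists>p. U p = Some s \<and>
      0 \<le> Re (trace (\<rho> ** R s)) \<and> Re (trace (\<rho> ** R s)) \<le> C * (1/2) ^ length p"
    using computable_povm_measurement_bound[OF assms] by blast
  obtain d :: nat where "C \<le> 2 ^ d" using real_arch_pow[of 2 C] by (auto intro: less_imp_le)
  have "computer U" using assms(1) unfolding optimal_computer_def by blast
  show ?thesis
  proof (intro conjI exI[of _ d] exI[of _ C] allI impI)
    fix \<rho> :: "complex^'n^'n" and s assume "density_matrix \<rho>"
    then obtain p where p: "U p = Some s" "0 \<le> Re (trace (\<rho> ** R s))"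
      "Re (trace (\<rho> ** R s)) \<le> C * (1/2) ^ length p" using bound by blast
    have "C * (1/2) ^ length p \<le> 2 ^ d * (1/2) ^ Kc U s"
      using \<open>C \<le> 2 ^ d\<close> Kc_le_length[of U, OF p(1)] by (intro mult_mono power_decreasing) simp_all
    with p(2,3) show "ereal (real (Kc U s)) - ereal (real d) \<le> neg_log2 (Re (trace (\<rho> ** R s)))"
      by (intro neg_log2_ge) simp_all
  next
    fix \<rho> :: "complex^'n^'n" and s assume "density_matrix \<rho>"
    then obtain p where p: "U p = Some s" "Re (trace (\<rho> ** R s)) \<le> C * (1/2) ^ length p"
      using bound by blast
    have "C * (1/2) ^ length p \<le> C * Pc U s"
      using Pc_ge_program[OF \<open>computer U\<close> p(1)] \<open>C > 0\<close> by simp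
    with p(2) show "Re (trace (\<rho> ** R s)) \<le> C * Pc U s" by linarith
  qed (rule \<open>C > 0\<close>)
qed

end
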